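(* Let $(E,(\cdot,\cdot),\mathcal H)$ be an extended affine Lie algebra with root system $R$, let $R'$ be a closed subsystem of $R$ and let $\mathcal H'$ be a cover of $R'$. Then the Lie cover $E_{R',\mathcal H'}$ (with the bracket and form of $E$) is an extended affine Lie algebra with Cartan subalgebra $\mathcal H'$ and root system $R'$ (each $\alpha\in R'$ identified with its restriction to $\mathcal H'$). In particular, $E_{R',\mathcal H}$ is an extended affine Lie algebra with root system $R'$.
   Context: All Lie algebras are over $\mathbb C$. An extended affine Lie algebra (EALA) is a triple $(E,(\cdot,\cdot),\mathcal H)$ where $E$ is a Lie algebra, $\mathcal H$ a subalgebra and $(\cdot,\cdot)$ a bilinear form on $E$ such that: (EA1) symmetric, non-degenerate, invariant form; (EA2) $\mathcal H$ finite-dimensional, $E=\bigoplus_{\alpha\in\mathcal H^*}E_\alpha$, $E_\alpha=\{x:[h,x]=\alpha(h)x\ \forall h\in\mathcal H\}$, $E_0=\mathcal H$; root system $R=\{\alpha:E_\alpha\ne0\}$; $t_\alpha\in\mathcal H$ given by $\alpha(h)=(h,t_\alpha)$, $(\alpha,\beta):=(t_\alpha,t_\beta)$, $R^\times=\{\alpha\in R:(\alpha,\alpha)\neq0\}$, $R^0=R\setminus R^\times$; (EA3) $\mathrm{ad}\,x$ locally nilpotent for $x\in E_\alpha$, $\alpha\in R^\times$; (EA4) $R$ discrete; (EA5) $R^\times$ connected (not a union of two nonempty mutually orthogonal subsets) and every $\sigma\in R^0$ non-isolated ($\alpha+\sigma\in R$ for some $\alpha\in R^\times$). Throughout the finite root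 system obtained from $R$ modulo $\mathrm{span}_{\mathbb R}R^0$ is assumed reduced. Extended affine root system (EARS): a triple $(R,(\cdot,\cdot),\mathcal V)$, $\mathcal V$ finite-dimensional real, form symmetric positive semidefinite, $R\subseteq\mathcal V$ with: $0\in R$; $R=-R$; $R$ spans $\mathcal V$; $\alpha\in R^\times\Rightarrow2\alpha\notin R$; $R$ discrete; root string property (for $\alpha\in R^\times,\beta\in R$ there are integers $d,u\ge0$ with $(\beta+\mathbb Z\alpha)\cap R=\{\beta-d\alpha,\dots,\beta+u\alpha\}$ and $2(\beta,\alpha)/(\alpha,\alpha)=d-u$); isotropic roots non-isolated; $R^\times$ connected. A subsystem of $R$ is $R'\subseteq R$ with $(R',(\cdot,\cdot)|,\mathrm{span}_{\mathbb R}R')$ an EARS; it is closed if $\alpha,\beta\in R'$, $\alpha+\beta\in R$ imply $\alpha+\beta\in R'$. A cover of a closed subsystem $R'$ is a subspace $\mathcal H'\subseteq\mathcal H$ with $t_\alpha\in\mathcal H'$ for all $\alpha\in R'^\times$ such that the form restricted to $\mathcal H'$ is non-degenerate. The Lie cover is $E_{R',\mathcal H'}:=\mathcal H'\oplus\sum_{\alpha\in R'\setminus\{0\}}E_\alpha$. *)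

theory Defs
  imports Complex_Main
begin

text \<open>Linear functionals on a
subspace H are represented by functions 'v => complex that are linear on H and
vanish outside H (a canonical representative of an element of the dual of H).\<close>

definition lie_algebra :: "(complex \<Rightarrow> 'v::ab_group_add \<Rightarrow> 'v) \<Rightarrow> 'v set \<Rightarrow> ('v \<Rightarrow> 'v \<Rightarrow> 'v) \<Rightarrow> bool" where
  "lie_algebra sc L br \<longleftrightarrow>
     module.subspace sc L \<and>
     (\<forall>x\<in>L. \<forall>y\<in>L. br x y \<in> L) \<and>
     (\<forall>x\<in>L. \<forall>y\<in>L. \<forall>z\<in>L. br (x + y) z = br x z + br y z \<and> br z (x + y) = br z x + br z y) \<and>
     (\<forall>c. \<forall>x\<in>L. \<forall>y\<in>L. br (sc c x) y = sc c (br x y) \<and> br x (sc c y) = sc c (br x y)) \<and>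
     (\<forall>x\<in>L. br x x = 0) \<and>
     (\<forall>x\<in>L. \<forall>y\<in>L. \<forall>z\<in>L. br x (br y z) + br y (br z x) + br z (br x y) = 0)"

definition ea1_form :: "(complex \<Rightarrow> 'v::ab_group_add \<Rightarrow> 'v) \<Rightarrow> 'v set \<Rightarrow> ('v \<Rightarrow> 'v \<Rightarrow> 'v) \<Rightarrow> ('v \<Rightarrow> 'v \<Rightarrow> complex) \<Rightarrow> bool" where
  "ea1_form sc L br B \<longleftrightarrow>
     (\<forall>x\<in>L. \<forall>y\<in>L. \<forall>z\<in>L. B (x + y) z = B x z + B y z) \<and>
     (\<forall>c. \<forall>x\<in>L. \<forall>y\<in>L. B (sc c x) y = c * B x y) \<and>
     (\<forall>x\<in>L. \<forall>y\<in>L. B x y = B y x) \<and>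
     (\<forall>x\<in>L. (\<forall>y\<in>L. B x y = 0) \<longrightarrow> x = 0) \<and>
     (\<forall>x\<in>L. \<forall>y\<in>L. \<forall>z\<in>L. B (br x y) z = B x (br y z))"

definition hdual :: "(complex \<Rightarrow> 'v::ab_group_add \<Rightarrow> 'v) \<Rightarrow> 'v set \<Rightarrow> ('v \<Rightarrow> complex) set" where
  "hdual sc H = {\<alpha>. (\<forall>x\<in>H. \<forall>y\<in>H. \<alpha> (x + y) = \<alpha> x + \<alpha> y) \<and>
                     (\<forall>c. \<forall>x\<in>H. \<alpha> (sc c x) = c * \<alpha> x) \<and>
                     (\<forall>x. x \<notin> H \<longrightarrow> \<alpha> x = 0)}"

definition restr :: "'v set \<Rightarrow> ('v \<Rightarrow> complex) \<Rightarrow> ('v \<Rightarrow> complex)" where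
  "restr H' \<alpha> = (\<lambda>x. if x \<in> H' then \<alpha> x else 0)"

definition rootsp :: "(complex \<Rightarrow> 'v::ab_group_add \<Rightarrow> 'v) \<Rightarrow> 'v set \<Rightarrow> ('v \<Rightarrow> 'v \<Rightarrow> 'v) \<Rightarrow> 'v set \<Rightarrow> ('v \<Rightarrow> complex) \<Rightarrow> 'v set" where
  "rootsp sc L br H \<alpha> = {x \<in> L. \<forall>h\<in>H. br h x = sc (\<alpha> h) x}"

definition roots :: "(complex \<Rightarrow> 'v::ab_group_add \<Rightarrow> 'v) \<Rightarrow> 'v set \<Rightarrow> ('v \<Rightarrow> 'v \<Rightarrow> 'v) \<Rightarrow> 'v set \<Rightarrow> ('v \<Rightarrow> complex) set" where
  "roots sc L br H = {\<alpha> \<in> hdual sc H. rootsp sc L br H \<alpha> \<noteq> {0}}"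

definition tvec :: "('v \<Rightarrow> 'v \<Rightarrow> complex) \<Rightarrow> 'v set \<Rightarrow> ('v \<Rightarrow> complex) \<Rightarrow> 'v" where
  "tvec B H \<alpha> = (THE t. t \<in> H \<and> (\<forall>h\<in>H. \<alpha> h = B h t))"

definition ipf :: "('v \<Rightarrow> 'v \<Rightarrow> complex) \<Rightarrow> 'v set \<Rightarrow> ('v \<Rightarrow> complex) \<Rightarrow> ('v \<Rightarrow> complex) \<Rightarrow> complex" where
  "ipf B H \<alpha> \<beta> = B (tvec B H \<alpha>) (tvec B H \<beta>)"

definition rspan :: "('v \<Rightarrow> complex) set \<Rightarrow> ('v \<Rightarrow> complex) set" where
  "rspan S = {f. \<exists>F c. finite F \<and> F \<subseteq> S \<and>
                   f = (\<lambda>h. \<Sum>\<beta>\<in>F. complex_of_real (c \<beta>) * \<beta> h)}"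

text \<open>Discreteness of a set S of functionals on H in the (unique Hausdorff vector space)
topology of H^*, written via the basic neighbourhoods of the topology of pointwise
convergence on H (which coincides with the norm topology, H being finite-dimensional).\<close>
definition discrete_dual :: "'v set \<Rightarrow> ('v \<Rightarrow> complex) set \<Rightarrow> bool" where
  "discrete_dual H S \<longleftrightarrow>
     (\<forall>\<alpha>\<in>S. \<exists>F \<epsilon>. finite F \<and> F \<subseteq> H \<and> \<epsilon> > 0 \<and>
        (\<forall>\<beta>\<in>S. (\<forall>h\<in>F. cmod (\<beta> h - \<alpha> h) < \<epsilon>) \<longrightarrow> \<beta> = \<alpha>))"

definition nonisot :: "(('v \<Rightarrow> complex) \<Rightarrow> ('v \<Rightarrow> complex) \<Rightarrow> complex) \<Rightarrow> ('v \<Rightarrow> complex) set \<Rightarrow> ('v \<Rightarrow> complex) set" where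
  "nonisot ip S = {\<alpha> \<in> S. ip \<alpha> \<alpha> \<noteq> 0}"

definition isot :: "(('v \<Rightarrow> complex) \<Rightarrow> ('v \<Rightarrow> complex) \<Rightarrow> complex) \<Rightarrow> ('v \<Rightarrow> complex) set \<Rightarrow> ('v \<Rightarrow> complex) set" where
  "isot ip S = {\<alpha> \<in> S. ip \<alpha> \<alpha> = 0}"

definition connected_roots :: "(('v \<Rightarrow> complex) \<Rightarrow> ('v \<Rightarrow> complex) \<Rightarrow> complex) \<Rightarrow> ('v \<Rightarrow> complex) set \<Rightarrow> bool" where
  "connected_roots ip S \<longleftrightarrow>
     \<not> (\<exists>A C. A \<noteq> {} \<and> C \<noteq> {} \<and> A \<union> C = nonisot ip S \<and> (\<forall>a\<in>A. \<forall>b\<in>C. ip a b = 0))"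

definition isot_nonisolated :: "(('v \<Rightarrow> complex) \<Rightarrow> ('v \<Rightarrow> complex) \<Rightarrow> complex) \<Rightarrow> ('v \<Rightarrow> complex) set \<Rightarrow> bool" where
  "isot_nonisolated ip S \<longleftrightarrow>
     (\<forall>\<sigma>\<in>isot ip S. \<exists>\<alpha>\<in>nonisot ip S. (\<lambda>h. \<alpha> h + \<sigma> h) \<in> S)"

text \<open>Standing assumption: the finite root system R^x modulo span_R R^0 is reduced,
i.e. for alpha, beta in R^x, beta - 2 alpha does not lie in span_R R^0.\<close>
definition reduced_quot :: "(('v \<Rightarrow> complex) \<Rightarrow> ('v \<Rightarrow> complex) \<Rightarrow> complex) \<Rightarrow> ('v \<Rightarrow> complex) set \<Rightarrow> bool" where
  "reduced_quot ip S \<longleftrightarrow>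
     (\<forall>\<alpha>\<in>nonisot ip S. \<forall>\<beta>\<in>nonisot ip S. (\<lambda>h. \<beta> h - 2 * \<alpha> h) \<notin> rspan (isot ip S))"

definition eala :: "(complex \<Rightarrow> 'v::ab_group_add \<Rightarrow> 'v) \<Rightarrow> 'v set \<Rightarrow> ('v \<Rightarrow> 'v \<Rightarrow> 'v) \<Rightarrow> ('v \<Rightarrow> 'v \<Rightarrow> complex) \<Rightarrow> 'v set \<Rightarrow> bool" where
  "eala sc L br B H \<longleftrightarrow>
     lie_algebra sc L br \<and>
     \<comment> \<open>(EA1)\<close>
     ea1_form sc L br B \<and>
     \<comment> \<open>(EA2)\<close>
     H \<subseteq> L \<and> module.subspace sc H \<and> (\<forall>x\<in>H. \<forall>y\<in>H. br x y \<in> H) \<and>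
     (\<exists>F. finite F \<and> F \<subseteq> H \<and> module.span sc F = H) \<and>
     L = module.span sc (\<Union>\<alpha>\<in>hdual sc H. rootsp sc L br H \<alpha>) \<and>
     (\<forall>F x. finite F \<and> F \<subseteq> hdual sc H \<and> (\<forall>\<alpha>\<in>F. x \<alpha> \<in> rootsp sc L br H \<alpha>) \<and> sum x F = 0
            \<longrightarrow> (\<forall>\<alpha>\<in>F. x \<alpha> = 0)) \<and>
     rootsp sc L br H (\<lambda>_. 0) = H \<and>
     \<comment> \<open>(EA3)\<close>
     (\<forall>\<alpha>\<in>nonisot (ipf B H) (roots sc L br H). \<forall>x\<in>rootsp sc L br H \<alpha>. \<forall>y\<in>L.
         \<exists>n. (br x ^^ n) y = 0) \<and>
     \<comment> \<open>(EA4)\<close>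
     discrete_dual H (roots sc L br H) \<and>
     \<comment> \<open>(EA5)\<close>
     connected_roots (ipf B H) (roots sc L br H) \<and>
     isot_nonisolated (ipf B H) (roots sc L br H) \<and>
     \<comment> \<open>standing assumption\<close>
     reduced_quot (ipf B H) (roots sc L br H)"

definition is_ears :: "'v set \<Rightarrow> (('v \<Rightarrow> complex) \<Rightarrow> ('v \<Rightarrow> complex) \<Rightarrow> complex) \<Rightarrow> ('v \<Rightarrow> complex) set \<Rightarrow> bool" where
  "is_ears H ip S \<longleftrightarrow>
     \<comment> \<open>the form is a real symmetric positive semidefinite bilinear form on V\<close>
     (\<forall>x\<in>rspan S. \<forall>y\<in>rspan S. \<forall>z\<in>rspan S. ip (\<lambda>h. x h + y h) z = ip x z + ip y z) \<and>
     (\<forall>c::real. \<forall>x\<in>rspan S. \<forall>y\<in>rspan S. ip (\<lambda>h. complex_of_real c * x h) y = complex_of_real c * ip x y) \<and>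
     (\<forall>x\<in>rspan S. \<forall>y\<in>rspan S. ip x y = ip y x \<and> Im (ip x y) = 0) \<and>
     (\<forall>x\<in>rspan S. Re (ip x x) \<ge> 0) \<and>
     (\<lambda>_. 0) \<in> S \<and>
     (\<forall>\<alpha>\<in>S. (\<lambda>h. - \<alpha> h) \<in> S) \<and>
     (\<forall>\<alpha>\<in>nonisot ip S. (\<lambda>h. 2 * \<alpha> h) \<notin> S) \<and>
     discrete_dual H S \<and>
     (\<forall>\<alpha>\<in>nonisot ip S. \<forall>\<beta>\<in>S. \<exists>d u::nat.
        {k::int. (\<lambda>h. \<beta> h + of_int k * \<alpha> h) \<in> S} = {- int d .. int u} \<and>
        2 * ip \<beta> \<alpha> / ip \<alpha> \<alpha> = of_int (int d - int u)) \<and>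
     isot_nonisolated ip S \<and>
     connected_roots ip S"

definition closed_subsystem :: "(complex \<Rightarrow> 'v::ab_group_add \<Rightarrow> 'v) \<Rightarrow> 'v set \<Rightarrow> ('v \<Rightarrow> 'v \<Rightarrow> 'v) \<Rightarrow> ('v \<Rightarrow> 'v \<Rightarrow> complex) \<Rightarrow> 'v set \<Rightarrow> ('v \<Rightarrow> complex) set \<Rightarrow> bool" where
  "closed_subsystem sc L br B H R' \<longleftrightarrow>
     R' \<subseteq> roots sc L br H \<and>
     is_ears H (ipf B H) R' \<and>
     (\<forall>\<alpha>\<in>R'. \<forall>\<beta>\<in>R'. (\<lambda>h. \<alpha> h + \<beta> h) \<in> roots sc L br H \<longrightarrow> (\<lambda>h. \<alpha> h + \<beta> h) \<in> R')"

definition is_cover :: "(complex \<Rightarrow> 'v::ab_group_add \<Rightarrow> 'v) \<Rightarrow> ('v \<Rightarrow> 'v \<Rightarrow> complex) \<Rightarrow> 'v set \<Rightarrow> ('v \<Rightarrow> complex) set \<Rightarrow> 'v set \<Rightarrow> bool" where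
  "is_cover sc B H R' H' \<longleftrightarrow>
     module.subspace sc H' \<and> H' \<subseteq> H \<and>
     (\<forall>\<alpha>\<in>nonisot (ipf B H) R'. tvec B H \<alpha> \<in> H') \<and>
     (\<forall>x\<in>H'. (\<forall>y\<in>H'. B x y = 0) \<longrightarrow> x = 0)"

definition lie_cover :: "(complex \<Rightarrow> 'v::ab_group_add \<Rightarrow> 'v) \<Rightarrow> 'v set \<Rightarrow> ('v \<Rightarrow> 'v \<Rightarrow> 'v) \<Rightarrow> 'v set \<Rightarrow> ('v \<Rightarrow> complex) set \<Rightarrow> 'v set \<Rightarrow> 'v set" where
  "lie_cover sc L br H R' H' =
     module.span sc (H' \<union> (\<Union>\<alpha>\<in>R' - {\<lambda>_. 0}. rootsp sc L br H \<alpha>))"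

end

theory Submission
  imports Defs "HOL-Library.Function_Algebras"
begin

text \<open>
  Everything rests on the vectors t_\<alpha> for \<alpha> in R'. A cover H' contains them for
  nonisotropic \<alpha> by definition, and also for isotropic \<sigma>: the form is positive semidefinite
  on the real span of R', so t_\<sigma> is orthogonal to every t_\<alpha>, and \<sigma> is non-isolated, so
  t_\<sigma> = t_(\<alpha>+\<sigma>) - t_\<alpha> with \<alpha> and \<alpha> + \<sigma> both nonisotropic. Hence roots in R' are
  determined by their restrictions to H', restriction to H' is an isometry, and every E_\<alpha>,
  \<alpha> in R' - {0}, is exactly a root space of the Lie cover with respect to H'. Closedness of R'
  together with [E_\<alpha>, E_(-\<alpha>)] \<subseteq> \<complex> t_\<alpha> \<subseteq> H' makes the Lie cover a subalgebra, and the
  form stays nondegenerate on it because it pairs E_\<alpha> nondegenerately with E_(-\<alpha>). The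
  remaining axioms transfer from E and R' along the restriction map.
\<close>

section \<open>Functionals on subspaces\<close>

lemma sum_fun_apply: "(\<Sum>i\<in>I. f i) x = (\<Sum>i\<in>I. f i x)"
  by (induction I rule: infinite_finite_induct) auto

definition fun_scale :: "complex \<Rightarrow> ('a \<Rightarrow> complex) \<Rightarrow> 'a \<Rightarrow> complex" where
  "fun_scale c f = (\<lambda>x. c * f x)"

interpretation fun_space: vector_space fun_scale
  by unfold_locales (auto simp: fun_scale_def fun_eq_iff algebra_simps)

definition form_functional :: "('v \<Rightarrow> 'v \<Rightarrow> complex) \<Rightarrow> 'v set \<Rightarrow> 'v \<Rightarrow> 'v \<Rightarrow> complex" where
  "form_functional B W t = restr W (\<lambda>h. B h t)"

definition nondegenerate_on :: "('v::zero \<Rightarrow> 'v \<Rightarrow> complex) \<Rightarrow> 'v set \<Rightarrow> bool" where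
  "nondegenerate_on B W \<longleftrightarrow> (\<forall>x\<in>W. (\<forall>y\<in>W. B x y = 0) \<longrightarrow> x = 0)"

lemma hdual_eqI:
  assumes "\<alpha> \<in> hdual sc K" "\<beta> \<in> hdual sc K" "\<And>h. h \<in> K \<Longrightarrow> \<alpha> h = \<beta> h"
  shows "\<alpha> = \<beta>"
  using assms by (auto simp: hdual_def fun_eq_iff) (metis)

lemma hdual_zero: "(\<lambda>_. 0) \<in> hdual sc K"
  by (simp add: hdual_def)

lemma hdual_linear_combination:
  assumes "\<alpha> \<in> hdual sc K" "\<beta> \<in> hdual sc K"
  shows "(\<lambda>h. a * \<alpha> h + b * \<beta> h) \<in> hdual sc K"
  using assms by (auto simp: hdual_def algebra_simps)

lemma hdual_sum:
  assumes G: "G \<subseteq> hdual sc K"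
  shows "(\<lambda>h. \<Sum>\<sigma>\<in>G. c \<sigma> * \<sigma> h) \<in> hdual sc K"
  unfolding hdual_def
proof (intro CollectI conjI ballI allI impI)
  fix x y assume "x \<in> K" "y \<in> K"
  then show "(\<Sum>\<sigma>\<in>G. c \<sigma> * \<sigma> (x + y)) = (\<Sum>\<sigma>\<in>G. c \<sigma> * \<sigma> x) + (\<Sum>\<sigma>\<in>G. c \<sigma> * \<sigma> y)"
    using G by (auto simp: hdual_def distrib_left sum.distrib[symmetric] intro!: sum.cong)
next
  fix a x assume "x \<in> K"
  then show "(\<Sum>\<sigma>\<in>G. c \<sigma> * \<sigma> (sc a x)) = a * (\<Sum>\<sigma>\<in>G. c \<sigma> * \<sigma> x)"
    using G by (auto simp: hdual_def sum_distrib_left mult.left_commute intro!: sum.cong)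
next
  fix x assume "x \<notin> K"
  then show "(\<Sum>\<sigma>\<in>G. c \<sigma> * \<sigma> x) = 0"
    using G by (auto simp: hdual_def intro!: sum.neutral)
qed

lemma restr_apply [simp]: "h \<in> K \<Longrightarrow> restr K \<alpha> h = \<alpha> h"
  by (simp add: restr_def)

lemma restr_hdual_self: "\<alpha> \<in> hdual sc K \<Longrightarrow> restr K \<alpha> = \<alpha>"
  by (auto simp: restr_def hdual_def fun_eq_iff)

lemma restr_add: "restr K (\<lambda>h. \<alpha> h + \<beta> h) = (\<lambda>h. restr K \<alpha> h + restr K \<beta> h)"
  by (simp add: restr_def fun_eq_iff)

lemma rspan_base: "\<alpha> \<in> S \<Longrightarrow> \<alpha> \<in> rspan S"
  unfolding rspan_def by (intro CollectI exI[of _ "{\<alpha>}"] exI[of _ "\<lambda>_. 1"]) auto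

lemma rspan_mono: "S \<subseteq> T \<Longrightarrow> rspan S \<subseteq> rspan T"
  unfolding rspan_def by blast

lemma rspan_add_scale:
  assumes "\<phi> \<in> rspan S" "\<psi> \<in> rspan S"
  shows "(\<lambda>h. \<phi> h + complex_of_real c * \<psi> h) \<in> rspan S"
proof -
  obtain F1 c1 where F1: "finite F1" "F1 \<subseteq> S"
    and \<phi>: "\<phi> = (\<lambda>h. \<Sum>\<beta>\<in>F1. complex_of_real (c1 \<beta>) * \<beta> h)"
    using assms(1) unfolding rspan_def by blast
  obtain F2 c2 where F2: "finite F2" "F2 \<subseteq> S"
    and \<psi>: "\<psi> = (\<lambda>h. \<Sum>\<beta>\<in>F2. complex_of_real (c2 \<beta>) * \<beta> h)"
    using assms(2) unfolding rspan_def by blast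
  define d where "d \<beta> = (if \<beta> \<in> F1 then c1 \<beta> else 0) + c * (if \<beta> \<in> F2 then c2 \<beta> else 0)" for \<beta>
  have "\<phi> h + complex_of_real c * \<psi> h = (\<Sum>\<beta>\<in>F1 \<union> F2. complex_of_real (d \<beta>) * \<beta> h)" for h
  proof -
    have "(\<Sum>\<beta>\<in>F1 \<union> F2. complex_of_real (d \<beta>) * \<beta> h)
        = (\<Sum>\<beta>\<in>F1 \<union> F2. if \<beta> \<in> F1 then complex_of_real (c1 \<beta>) * \<beta> h else 0)
          + complex_of_real c * (\<Sum>\<beta>\<in>F1 \<union> F2. if \<beta> \<in> F2 then complex_of_real (c2 \<beta>) * \<beta> h else 0)"
    proof -
      have "complex_of_real (d \<beta>) * \<beta> h = (if \<beta> \<in> F1 then complex_of_real (c1 \<beta>) * \<beta> h else 0)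
          + complex_of_real c * (if \<beta> \<in> F2 then complex_of_real (c2 \<beta>) * \<beta> h else 0)" for \<beta>
        by (simp add: d_def distrib_right)
      then show ?thesis by (simp only: sum.distrib sum_distrib_left)
    qed
    also have "\<dots> = \<phi> h + complex_of_real c * \<psi> h"
      using F1(1) F2(1) by (simp add: \<phi> \<psi> sum.inter_restrict[symmetric] Int_absorb1 Int_absorb2)
    finally show ?thesis by simp
  qed
  then show ?thesis
    using F1 F2 unfolding rspan_def by (intro CollectI exI[of _ "F1 \<union> F2"] exI[of _ d]) auto
qed

lemma rspan_restr_image:
  assumes "\<phi> \<in> rspan (restr K ` S)"
  shows "\<exists>\<psi>\<in>rspan S. \<phi> = restr K \<psi>"
proof -
  obtain F c where F: "finite F" "F \<subseteq> restr K ` S"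
    and \<phi>: "\<phi> = (\<lambda>h. \<Sum>g\<in>F. complex_of_real (c g) * g h)"
    using assms unfolding rspan_def by blast
  define pre where "pre = inv_into S (restr K)"
  have pre: "pre g \<in> S" "restr K (pre g) = g" if "g \<in> F" for g
    using F that by (auto simp: pre_def inv_into_into f_inv_into_f)
  have inj: "inj_on pre F" using pre(2) by (metis inj_onI)
  define \<psi> where "\<psi> = (\<lambda>h. \<Sum>s\<in>pre ` F. complex_of_real (c (restr K s)) * s h)"
  have "\<psi> \<in> rspan S"
    unfolding rspan_def \<psi>_def using F(1) pre(1)
    by (intro CollectI exI[of _ "pre ` F"] exI[of _ "\<lambda>s. c (restr K s)"]) auto
  moreover have "\<phi> = restr K \<psi>"
  proof
    fix h
    show "\<phi> h = restr K \<psi> h"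
    proof (cases "h \<in> K")
      case True
      then have "pre g h = g h" if "g \<in> F" for g using pre(2)[OF that] by (metis restr_apply)
      then show ?thesis
        using True by (simp add: \<phi> \<psi>_def sum.reindex[OF inj] pre(2) cong: sum.cong)
    next
      case False
      then have "complex_of_real (c g) * g h = 0" if "g \<in> F" for g
        using fun_cong[OF pre(2)[OF that], of h] False by (simp add: restr_def)
      then have "(\<Sum>g\<in>F. complex_of_real (c g) * g h) = 0" by (rule sum.neutral[OF ballI])
      then show ?thesis using False by (simp add: \<phi> restr_def)
    qed
  qed
  ultimately show ?thesis by blast
qed

lemma nonisot_image:
  assumes "\<forall>a\<in>S. ip' (g a) (g a) = ip a a"
  shows "nonisot ip' (g ` S) = g ` nonisot ip S"
  using assms by (auto simp: nonisot_def)

lemma isot_image: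
  assumes "\<forall>a\<in>S. ip' (g a) (g a) = ip a a"
  shows "isot ip' (g ` S) = g ` isot ip S"
  using assms by (auto simp: isot_def)

lemma connected_roots_image:
  assumes ip: "\<forall>a\<in>S. \<forall>b\<in>S. ip' (g a) (g b) = ip a b" and conn: "connected_roots ip S"
  shows "connected_roots ip' (g ` S)"
  unfolding connected_roots_def
proof
  have nonisot_eq: "nonisot ip' (g ` S) = g ` nonisot ip S"
    using ip by (intro nonisot_image) blast
  assume "\<exists>A C. A \<noteq> {} \<and> C \<noteq> {} \<and> A \<union> C = nonisot ip' (g ` S) \<and> (\<forall>a\<in>A. \<forall>b\<in>C. ip' a b = 0)"
  then obtain A C where AC: "A \<noteq> {}" "C \<noteq> {}" "A \<union> C = g ` nonisot ip S"
    and orth: "\<forall>a\<in>A. \<forall>b\<in>C. ip' a b = 0"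
    unfolding nonisot_eq by blast
  let ?A = "{a \<in> nonisot ip S. g a \<in> A}" and ?C = "{a \<in> nonisot ip S. g a \<in> C}"
  have nonempty: "{a \<in> nonisot ip S. g a \<in> X} \<noteq> {}" if X: "X \<noteq> {}" "X \<subseteq> g ` nonisot ip S" for X
  proof -
    obtain x where x: "x \<in> X" using X(1) by blast
    then obtain a where "a \<in> nonisot ip S" "x = g a" using X(2) by blast
    then show ?thesis using x by blast
  qed
  have A: "?A \<noteq> {}" by (rule nonempty[OF AC(1)]) (use AC(3) in blast)
  have C: "?C \<noteq> {}" by (rule nonempty[OF AC(2)]) (use AC(3) in blast)
  have union: "?A \<union> ?C = nonisot ip S" using AC(3) by blast
  have orth': "\<forall>a\<in>?A. \<forall>b\<in>?C. ip a b = 0"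
  proof (intro ballI)
    fix a b assume ab: "a \<in> ?A" "b \<in> ?C"
    then have "ip a b = ip' (g a) (g b)" using ip by (simp add: nonisot_def)
    also have "\<dots> = 0" using orth ab by simp
    finally show "ip a b = 0" .
  qed
  have "\<And>A C. A \<noteq> {} \<Longrightarrow> C \<noteq> {} \<Longrightarrow> A \<union> C = nonisot ip S \<Longrightarrow>
      \<forall>a\<in>A. \<forall>b\<in>C. ip a b = 0 \<Longrightarrow> False"
    using conn unfolding connected_roots_def by blast
  from this[OF A C union orth'] show False .
qed

locale complex_vector_space = vector_space sc for sc :: "complex \<Rightarrow> 'v::ab_group_add \<Rightarrow> 'v"
begin

lemma restr_hdual:
  assumes "\<alpha> \<in> hdual sc H" "subspace K" "K \<subseteq> H"
  shows "restr K \<alpha> \<in> hdual sc K"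
  using assms subspace_add[OF assms(2)] subspace_scale[OF assms(2)]
  by (auto simp: hdual_def restr_def subset_iff)

lemma hdual_sum_scale:
  assumes "\<phi> \<in> hdual sc W" "subspace W" "\<And>i. i \<in> I \<Longrightarrow> g i \<in> W"
  shows "\<phi> (\<Sum>i\<in>I. sc (a i) (g i)) = (\<Sum>i\<in>I. a i * \<phi> (g i))"
  using assms(3)
proof (induction I rule: infinite_finite_induct)
  case (insert j I)
  have "(\<Sum>i\<in>I. sc (a i) (g i)) \<in> W" "sc (a j) (g j) \<in> W"
    using insert.prems assms(2) by (auto intro!: subspace_sum subspace_scale)
  then show ?case
    using insert assms(1) by (simp add: hdual_def)
qed (use assms(1,2) subspace_0 in \<open>auto simp: hdual_def dest!: bspec[of _ _ 0]\<close>)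

lemma span_Union_subspaces_sum:
  assumes U: "\<And>i. i \<in> I \<Longrightarrow> subspace (U i)" and x: "x \<in> span (\<Union>i\<in>I. U i)"
  shows "\<exists>F v. finite F \<and> F \<subseteq> I \<and> (\<forall>i\<in>F. v i \<in> U i) \<and> x = sum v F"
  using x
proof (induction rule: span_induct_alt)
  case base
  show ?case by (intro exI[of _ "{}"]) auto
next
  case (step c x y)
  then obtain j where j: "j \<in> I" "x \<in> U j" by auto
  from step obtain F v where F: "finite F" "F \<subseteq> I" "\<forall>i\<in>F. v i \<in> U i" "y = sum v F" by blast
  define w where "w = (if j \<in> F then v j else 0)"
  have w: "w \<in> U j" using F j U[OF j(1)] subspace_0 by (auto simp: w_def)
  define v' where "v' = v(j := sc c x + w)"
  have "sum v' (insert j F) = v' j + sum v (F - {j})"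
    using F by (simp add: sum.insert_remove v'_def)
  also have "\<dots> = sc c x + y"
    using F by (auto simp: v'_def w_def sum.remove add.assoc)
  finally show ?case
    using F w j U[OF j(1)]
    by (intro exI[of _ "insert j F"] exI[of _ v']) (auto simp: v'_def intro: subspace_add subspace_scale)
qed

lemma subspace_finite_basis:
  assumes W: "subspace W" "W \<subseteq> span F" and F: "finite F"
  shows "\<exists>Bs. finite Bs \<and> independent Bs \<and> span Bs = W"
proof -
  obtain Bs where Bs: "Bs \<subseteq> W" "independent Bs" "W \<subseteq> span Bs"
    using maximal_independent_subset[of W] by blast
  have "finite Bs" using independent_span_bound[OF F Bs(2)] Bs(1) W(2) by blast
  moreover have "span Bs = W" using span_subspace[OF Bs(1,3) W(1)] .
  ultimately show ?thesis using Bs by blast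
qed

end

section \<open>Riesz representation for symmetric bilinear forms\<close>

locale sym_bilinear_form = complex_vector_space sc
  for sc :: "complex \<Rightarrow> 'v::ab_group_add \<Rightarrow> 'v" +
  fixes V :: "'v set" and B :: "'v \<Rightarrow> 'v \<Rightarrow> complex"
  assumes subspace_V: "subspace V"
    and B_add_left: "x \<in> V \<Longrightarrow> y \<in> V \<Longrightarrow> z \<in> V \<Longrightarrow> B (x + y) z = B x z + B y z"
    and B_scale_left: "x \<in> V \<Longrightarrow> y \<in> V \<Longrightarrow> B (sc c x) y = c * B x y"
    and B_sym: "x \<in> V \<Longrightarrow> y \<in> V \<Longrightarrow> B x y = B y x"
begin

lemma B_add_right: "x \<in> V \<Longrightarrow> y \<in> V \<Longrightarrow> z \<in> V \<Longrightarrow> B z (x + y) = B z x + B z y"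
  using B_add_left[of x y z] B_sym subspace_add[OF subspace_V] by metis

lemma B_scale_right: "x \<in> V \<Longrightarrow> y \<in> V \<Longrightarrow> B x (sc c y) = c * B x y"
  using B_scale_left[of y x c] B_sym subspace_scale[OF subspace_V] by metis

lemma B_zero_right: "x \<in> V \<Longrightarrow> B x 0 = 0"
  using B_scale_right[of x 0 0] subspace_0[OF subspace_V] by simp

lemma B_diff_right: "x \<in> V \<Longrightarrow> y \<in> V \<Longrightarrow> z \<in> V \<Longrightarrow> B z (x - y) = B z x - B z y"
  using B_add_right[of x "- y" z] B_scale_right[of z y "-1"] subspace_neg[OF subspace_V, of y]
  by simp

lemma B_sum_right:
  "y \<in> V \<Longrightarrow> (\<And>i. i \<in> I \<Longrightarrow> f i \<in> V) \<Longrightarrow> B y (sum f I) = (\<Sum>i\<in>I. B y (f i))"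
proof (induction I rule: infinite_finite_induct)
  case (insert a I)
  then show ?case by (simp add: B_add_right subspace_sum[OF subspace_V])
qed (simp_all add: B_zero_right)

lemma B_zero_left: "x \<in> V \<Longrightarrow> B 0 x = 0"
  using B_zero_right B_sym subspace_0[OF subspace_V] by metis

lemma B_sum_left:
  "y \<in> V \<Longrightarrow> (\<And>i. i \<in> I \<Longrightarrow> f i \<in> V) \<Longrightarrow> B (sum f I) y = (\<Sum>i\<in>I. B (f i) y)"
proof (induction I rule: infinite_finite_induct)
  case (insert a I)
  then show ?case by (simp add: B_add_left subspace_sum[OF subspace_V])
qed (simp_all add: B_zero_left)

lemma B_square_add_scale:
  assumes "x \<in> V" "y \<in> V"
  shows "B (x + sc c y) (x + sc c y) = B x x + 2 * c * B x y + c * c * B y y"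
proof -
  have "sc c y \<in> V" using assms subspace_scale[OF subspace_V] by blast
  then have "B (x + sc c y) (x + sc c y) = B x x + B x (sc c y) + (B (sc c y) x + B (sc c y) (sc c y))"
    using assms by (simp add: B_add_left B_add_right subspace_add[OF subspace_V])
  also have "\<dots> = B x x + c * B x y + (c * B y x + c * (c * B y y))"
    using assms \<open>sc c y \<in> V\<close> by (simp add: B_scale_left B_scale_right)
  finally show ?thesis
    using B_sym[OF assms] by (simp add: algebra_simps)
qed

lemma tvec_unique:
  assumes W: "subspace W" "W \<subseteq> V" "nondegenerate_on B W"
    and t: "t \<in> W" "\<forall>h\<in>W. \<alpha> h = B h t"
  shows "tvec B W \<alpha> = t"
  unfolding tvec_def
proof (rule the_equality)
  fix t' assume t': "t' \<in> W \<and> (\<forall>h\<in>W. \<alpha> h = B h t')"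
  have "B (t' - t) y = 0" if y: "y \<in> W" for y
  proof -
    have V: "t \<in> V" "t' \<in> V" "y \<in> V" "t' - t \<in> V"
      using t t' y W(2) subspace_diff[OF W(1)] by auto
    have "B (t' - t) y = B y t' - B y t" using B_sym[OF V(4,3)] B_diff_right[OF V(2,1,3)] by simp
    then show ?thesis using t t' y by simp
  qed
  then have "t' - t = 0"
    using W(3) subspace_diff[OF W(1)] t(1) t' unfolding nondegenerate_on_def by blast
  then show "t' = t" by simp
qed (use t in blast)

lemma form_functional_eq_0:
  assumes W: "W \<subseteq> V" "nondegenerate_on B W" and t: "t \<in> W" "form_functional B W t = 0"
  shows "t = 0"
proof -
  have "B t y = 0" if "y \<in> W" for y
    using fun_cong[OF t(2), of y] that t(1) W(1) B_sym[of t y] by (auto simp: form_functional_def restr_def)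
  then show ?thesis using W(2) t(1) by (simp add: nondegenerate_on_def)
qed

text \<open>Riesz representation: the \<open>dim W\<close> functionals \<open>form_functional B W b\<close>, \<open>b\<close> in a basis,
  are linearly independent and lie in the span of the \<open>dim W\<close> coordinate functionals of
  that basis, hence they span every functional on \<open>W\<close>.\<close>

context
  fixes W Bs :: "'v set"
  assumes W: "subspace W" "W \<subseteq> V" "nondegenerate_on B W"
    and Bs: "finite Bs" "independent Bs" "span Bs = W"
begin

private lemma basis_subset: "Bs \<subseteq> W"
  using Bs(3) span_superset by blast

private lemma basis_combination_in: "(\<Sum>b\<in>Bs. sc (u b) b) \<in> W"
  using basis_subset by (intro subspace_sum[OF W(1)] subspace_scale[OF W(1)]) auto

private lemma hdual_in_span_coordinates:
  assumes \<psi>: "\<psi> \<in> hdual sc W"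
  shows "\<psi> \<in> fun_space.span ((\<lambda>b. restr W (\<lambda>x. representation Bs x b)) ` Bs)"
proof -
  have "\<psi> = (\<Sum>b\<in>Bs. fun_scale (\<psi> b) (restr W (\<lambda>x. representation Bs x b)))"
  proof
    fix x
    show "\<psi> x = (\<Sum>b\<in>Bs. fun_scale (\<psi> b) (restr W (\<lambda>x. representation Bs x b))) x"
    proof (cases "x \<in> W")
      case True
      then have "\<psi> x = \<psi> (\<Sum>b\<in>Bs. sc (representation Bs x b) b)"
        using sum_representation_eq[OF Bs(2) _ Bs(1) order_refl] Bs(3) by simp
      also have "\<dots> = (\<Sum>b\<in>Bs. representation Bs x b * \<psi> b)"
        by (rule hdual_sum_scale[OF \<psi> W(1)]) (use basis_subset in blast)
      finally show ?thesis using True by (simp add: sum_fun_apply fun_scale_def mult.commute)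
    qed (use \<psi> in \<open>simp add: sum_fun_apply fun_scale_def hdual_def restr_def\<close>)
  qed
  also have "\<dots> \<in> fun_space.span ((\<lambda>b. restr W (\<lambda>x. representation Bs x b)) ` Bs)"
    by (intro fun_space.span_sum fun_space.span_scale fun_space.span_base) auto
  finally show ?thesis .
qed

private lemma form_functional_hdual: "t \<in> W \<Longrightarrow> form_functional B W t \<in> hdual sc W"
  using W subspace_add[OF W(1)] subspace_scale[OF W(1)]
  by (auto simp: form_functional_def hdual_def restr_def subset_iff B_add_left B_scale_left)

private lemma form_functional_sum:
  "(\<Sum>b\<in>Bs. fun_scale (u b) (form_functional B W b)) = form_functional B W (\<Sum>b\<in>Bs. sc (u b) b)"
proof
  fix h
  show "(\<Sum>b\<in>Bs. fun_scale (u b) (form_functional B W b)) h = form_functional B W (\<Sum>b\<in>Bs. sc (u b) b) h"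
    using W basis_subset subspace_scale[OF subspace_V]
    by (auto simp: form_functional_def restr_def sum_fun_apply fun_scale_def B_sum_right B_scale_right
        subset_iff)
qed

private lemma inj_on_form_functional: "inj_on (form_functional B W) Bs"
proof
  fix b b' assume b: "b \<in> Bs" "b' \<in> Bs" "form_functional B W b = form_functional B W b'"
  have "B h b = B h b'" if "h \<in> W" for h
    using fun_cong[OF b(3), of h] that by (simp add: form_functional_def)
  then have "form_functional B W (b - b') = 0"
    using b basis_subset W(2)
    by (auto simp: form_functional_def restr_def fun_eq_iff B_diff_right subset_iff)
  then show "b = b'"
    using form_functional_eq_0[OF W(2,3), of "b - b'"] b basis_subset subspace_diff[OF W(1)] by auto
qed

private lemma form_functional_image_sum:
  "(\<Sum>g\<in>form_functional B W ` Bs. fun_scale (u g) g)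
    = form_functional B W (\<Sum>b\<in>Bs. sc (u (form_functional B W b)) b)"
  using sum.reindex[OF inj_on_form_functional, of "\<lambda>g. fun_scale (u g) g"]
    form_functional_sum[of "\<lambda>b. u (form_functional B W b)"]
  by (simp add: comp_def)

private lemma independent_form_functionals: "fun_space.independent (form_functional B W ` Bs)"
proof (rule fun_space.independent_if_scalars_zero)
  fix u g assume s: "(\<Sum>x\<in>form_functional B W ` Bs. fun_scale (u x) x) = 0"
    and g: "g \<in> form_functional B W ` Bs"
  have "form_functional B W (\<Sum>b\<in>Bs. sc (u (form_functional B W b)) b) = 0"
    using s by (simp only: form_functional_image_sum)
  then have sum0: "(\<Sum>b\<in>Bs. sc (u (form_functional B W b)) b) = 0"
    by (rule form_functional_eq_0[OF W(2,3) basis_combination_in])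
  have "u (form_functional B W b) = 0" if "b \<in> Bs" for b
    using independentD[OF Bs(2) Bs(1) order_refl, of "\<lambda>b. u (form_functional B W b)"] sum0 that
    by simp
  then show "u g = 0" using g by blast
qed (use Bs(1) in simp)

lemma hdual_represented:
  assumes \<phi>: "\<phi> \<in> hdual sc W"
  shows "\<exists>t\<in>W. \<forall>h\<in>W. \<phi> h = B h t"
proof -
  let ?T = "form_functional B W ` Bs"
  define C where "C = (\<lambda>b. restr W (\<lambda>x. representation Bs x b)) ` Bs"
  have "\<phi> \<in> fun_space.span ?T"
  proof (rule ccontr)
    assume \<phi>_notin: "\<phi> \<notin> fun_space.span ?T"
    then have \<phi>_new: "\<phi> \<notin> ?T" using fun_space.span_base by blast
    have "fun_space.independent (insert \<phi> ?T)"
      using \<phi>_notin fun_space.independent_insertI independent_form_functionals by blast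
    moreover have "insert \<phi> ?T \<subseteq> fun_space.span C"
      using hdual_in_span_coordinates \<phi> form_functional_hdual basis_subset by (auto simp: C_def)
    ultimately have "card (insert \<phi> ?T) \<le> card C"
      using fun_space.independent_span_bound[of C] Bs(1) by (simp add: C_def)
    also have "card C \<le> card Bs" unfolding C_def using card_image_le[OF Bs(1)] .
    finally show False using \<phi>_new Bs(1) card_image[OF inj_on_form_functional] by simp
  qed
  then obtain u where "\<phi> = (\<Sum>g\<in>?T. fun_scale (u g) g)"
    using fun_space.span_finite[of ?T] Bs(1) by auto
  then have "\<phi> = form_functional B W (\<Sum>b\<in>Bs. sc (u (form_functional B W b)) b)"
    by (simp only: form_functional_image_sum)
  then have "\<phi> h = B h (\<Sum>b\<in>Bs. sc (u (form_functional B W b)) b)" if "h \<in> W" for h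
    using that by (simp only: form_functional_def restr_apply)
  with basis_combination_in[of "\<lambda>b. u (form_functional B W b)"] show ?thesis by blast
qed

end

lemma tvec_represents:
  assumes W: "subspace W" "W \<subseteq> V" "W \<subseteq> span F" "finite F" "nondegenerate_on B W"
    and \<phi>: "\<phi> \<in> hdual sc W"
  shows "tvec B W \<phi> \<in> W" "\<forall>h\<in>W. \<phi> h = B h (tvec B W \<phi>)"
proof -
  obtain Bs where "finite Bs" "independent Bs" "span Bs = W"
    using subspace_finite_basis[OF W(1,3,4)] by blast
  then obtain t where t: "t \<in> W" "\<forall>h\<in>W. \<phi> h = B h t"
    using hdual_represented[OF W(1,2,5) _ _ _ \<phi>] by blast
  moreover have "tvec B W \<phi> = t" using tvec_unique[OF W(1,2,5) t] .
  ultimately show "tvec B W \<phi> \<in> W" "\<forall>h\<in>W. \<phi> h = B h (tvec B W \<phi>)" by simp_all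
qed

end

section \<open>Weight spaces of a Lie algebra with invariant form\<close>

lemma rootsp_subalgebra: "M \<subseteq> L \<Longrightarrow> rootsp sc M br K f = M \<inter> rootsp sc L br K f"
  by (auto simp: rootsp_def)

lemma rootsp_antimono: "K' \<subseteq> K \<Longrightarrow> rootsp sc L br K f \<subseteq> rootsp sc L br K' f"
  by (auto simp: rootsp_def)

locale lie_algebra_with_form = complex_vector_space sc
  for sc :: "complex \<Rightarrow> 'v::ab_group_add \<Rightarrow> 'v" +
  fixes L :: "'v set" and br :: "'v \<Rightarrow> 'v \<Rightarrow> 'v" and B :: "'v \<Rightarrow> 'v \<Rightarrow> complex"
  assumes lie: "lie_algebra sc L br" and form: "ea1_form sc L br B"

sublocale lie_algebra_with_form \<subseteq> sym_bilinear_form sc L B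
  using lie form by unfold_locales (auto simp: lie_algebra_def ea1_form_def)

context lie_algebra_with_form
begin

lemma br_closed: "x \<in> L \<Longrightarrow> y \<in> L \<Longrightarrow> br x y \<in> L"
  using lie by (simp add: lie_algebra_def)

lemma br_add_left: "x \<in> L \<Longrightarrow> y \<in> L \<Longrightarrow> z \<in> L \<Longrightarrow> br (x + y) z = br x z + br y z"
  using lie by (simp add: lie_algebra_def)

lemma br_add_right: "x \<in> L \<Longrightarrow> y \<in> L \<Longrightarrow> z \<in> L \<Longrightarrow> br z (x + y) = br z x + br z y"
  using lie by (simp add: lie_algebra_def)

lemma br_scale_right: "x \<in> L \<Longrightarrow> y \<in> L \<Longrightarrow> br x (sc c y) = sc c (br x y)"
  using lie by (simp add: lie_algebra_def)

lemma jacobi: "x \<in> L \<Longrightarrow> y \<in> L \<Longrightarrow> z \<in> L \<Longrightarrow> br x (br y z) + br y (br z x) + br z (br x y) = 0"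
  using lie by (simp add: lie_algebra_def)

lemma B_invariant: "x \<in> L \<Longrightarrow> y \<in> L \<Longrightarrow> z \<in> L \<Longrightarrow> B (br x y) z = B x (br y z)"
  using form by (simp add: ea1_form_def)

lemma B_nondegenerate: "nondegenerate_on B L"
  using form by (simp add: ea1_form_def nondegenerate_on_def)

lemma br_zero_right: "x \<in> L \<Longrightarrow> br x 0 = 0"
  using br_scale_right[of x 0 0] subspace_0[OF subspace_V] by simp

lemma br_antisym: "x \<in> L \<Longrightarrow> y \<in> L \<Longrightarrow> br x y = - br y x"
proof -
  assume xy: "x \<in> L" "y \<in> L"
  have self: "br z z = 0" if "z \<in> L" for z
    using lie that by (simp add: lie_algebra_def)
  have "br (x + y) (x + y) = br x x + br x y + (br y x + br y y)"
    using xy by (simp add: br_add_left br_add_right subspace_add[OF subspace_V])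
  then have "br x y + br y x = 0"
    using xy self subspace_add[OF subspace_V] by simp
  then show ?thesis by (simp add: eq_neg_iff_add_eq_0)
qed

lemma br_sum_right:
  "x \<in> L \<Longrightarrow> (\<And>i. i \<in> I \<Longrightarrow> f i \<in> L) \<Longrightarrow> br x (sum f I) = (\<Sum>i\<in>I. br x (f i))"
proof (induction I rule: infinite_finite_induct)
  case (insert a I)
  then show ?case by (simp add: br_add_right subspace_sum[OF subspace_V])
qed (simp_all add: br_zero_right)

lemma subspace_br_right_preimage:
  assumes "x \<in> L" "subspace S"
  shows "subspace {y \<in> L. br x y \<in> S}"
  using assms subspace_V
  by (auto simp: subspace_def br_zero_right br_add_right br_scale_right)

lemma subspace_br_left_preimage:
  assumes "y \<in> L" "subspace S"
  shows "subspace {x \<in> L. br x y \<in> S}"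
proof -
  have "{x \<in> L. br x y \<in> S} = {x \<in> L. br y x \<in> S}"
    using assms subspace_neg[OF assms(2)] br_antisym[OF _ assms(1)] by force
  then show ?thesis using subspace_br_right_preimage[OF assms] by simp
qed

lemma br_span_closed:
  assumes G: "G \<subseteq> L" and S: "subspace S"
    and gen: "\<And>x y. x \<in> G \<Longrightarrow> y \<in> G \<Longrightarrow> br x y \<in> S"
    and x: "x \<in> span G" and y: "y \<in> span G"
  shows "br x y \<in> S"
proof -
  have span_L: "span G \<subseteq> L" using span_minimal[OF G subspace_V] .
  have generator_left: "br g y \<in> S" if g: "g \<in> G" for g
  proof -
    have "y \<in> {y \<in> L. br g y \<in> S}"
      using y by (rule span_induct) (use G g gen subspace_br_right_preimage[OF _ S] in auto)
    then show ?thesis by simp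
  qed
  have "x \<in> {x \<in> L. br x y \<in> S}"
    using x by (rule span_induct)
      (use G generator_left span_L y subspace_br_left_preimage[OF _ S] in auto)
  then show ?thesis by simp
qed

lemma rootsp_subset: "rootsp sc L br K f \<subseteq> L"
  by (auto simp: rootsp_def)

lemma rootsp_subspace:
  assumes "K \<subseteq> L"
  shows "subspace (rootsp sc L br K f)"
  using assms subspace_V
  by (auto simp: subspace_def rootsp_def subset_iff br_zero_right br_add_right br_scale_right
      scale_right_distrib scale_left_commute)

lemma br_sum_weight_vectors:
  assumes "K \<subseteq> L" "h \<in> K" "\<forall>i\<in>F. v i \<in> rootsp sc L br K (f i)"
  shows "br h (sum v F) = (\<Sum>i\<in>F. sc (f i h) (v i))"
  using assms rootsp_subset by (auto simp: br_sum_right rootsp_def subset_iff intro!: sum.cong)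

lemma weight_vectors_sum_eq_0:
  assumes K: "K \<subseteq> L" and F: "finite F"
    and v: "\<forall>i\<in>F. v i \<in> rootsp sc L br K (f i)"
    and distinct: "\<forall>i\<in>F. \<forall>j\<in>F. i \<noteq> j \<longrightarrow> (\<exists>h\<in>K. f i h \<noteq> f j h)"
    and sum: "sum v F = 0"
  shows "\<forall>i\<in>F. v i = 0"
  using F v distinct sum
proof (induction F arbitrary: v rule: finite_induct)
  case (insert j F)
  \<comment> \<open>Applying \<open>ad h - f j h\<close> kills \<open>v j\<close> and keeps the other weight vectors in their weight spaces.\<close>
  have shifted: "\<forall>i\<in>F. sc (f i h - f j h) (v i) = 0" if h: "h \<in> K" for h
  proof -
    have "(\<Sum>i\<in>insert j F. sc (f i h) (v i)) = 0"
      using br_sum_weight_vectors[OF K h insert.prems(1)] insert.prems(3) K h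
      by (simp add: br_zero_right subset_iff)
    moreover have "(\<Sum>i\<in>insert j F. sc (f j h) (v i)) = 0"
      using insert.prems(3) by (simp add: scale_sum_right[symmetric])
    ultimately have "(\<Sum>i\<in>insert j F. sc (f i h - f j h) (v i)) = 0"
      by (simp add: scale_left_diff_distrib sum_subtractf)
    then have "(\<Sum>i\<in>F. sc (f i h - f j h) (v i)) = 0"
      using insert.hyps by simp
    moreover have "\<forall>i\<in>F. sc (f i h - f j h) (v i) \<in> rootsp sc L br K (f i)"
      using insert.prems(1) subspace_scale[OF rootsp_subspace[OF K]] by blast
    ultimately show ?thesis
      using insert.IH[of "\<lambda>i. sc (f i h - f j h) (v i)"] insert.prems(2) by blast
  qed
  have "v i = 0" if i: "i \<in> F" for i
  proof -
    have "i \<noteq> j" using i insert.hyps(2) by blast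
    then obtain h where "h \<in> K" "f i h \<noteq> f j h"
      using insert.prems(2) i by (meson insertCI)
    then show ?thesis using shifted i by auto
  qed
  moreover have "v j = 0" using calculation insert.prems(3) insert.hyps by simp
  ultimately show ?case by simp
qed simp

lemma weight_vector_eq_component:
  assumes K: "K \<subseteq> L" and F: "finite F"
    and v: "\<forall>i\<in>F. v i \<in> rootsp sc L br K (f i)"
    and distinct: "\<forall>i\<in>F. \<forall>j\<in>F. i \<noteq> j \<longrightarrow> (\<exists>h\<in>K. f i h \<noteq> f j h)"
    and x: "x = sum v F" "x \<in> rootsp sc L br K \<beta>" "x \<noteq> 0"
  shows "\<exists>i\<in>F. (\<forall>h\<in>K. \<beta> h = f i h) \<and> x = v i"
proof -
  have shifted: "\<forall>i\<in>F. sc (f i h - \<beta> h) (v i) = 0" if h: "h \<in> K" for h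
  proof -
    have "(\<Sum>i\<in>F. sc (f i h) (v i)) = (\<Sum>i\<in>F. sc (\<beta> h) (v i))"
      using br_sum_weight_vectors[OF K h v] x h by (simp add: rootsp_def scale_sum_right)
    then have "(\<Sum>i\<in>F. sc (f i h - \<beta> h) (v i)) = 0"
      by (simp add: scale_left_diff_distrib sum_subtractf)
    moreover have "\<forall>i\<in>F. sc (f i h - \<beta> h) (v i) \<in> rootsp sc L br K (f i)"
      using v subspace_scale[OF rootsp_subspace[OF K]] by blast
    ultimately show ?thesis
      using weight_vectors_sum_eq_0[OF K F _ distinct, of "\<lambda>i. sc (f i h - \<beta> h) (v i)"] by blast
  qed
  have weight: "\<forall>h\<in>K. \<beta> h = f i h" if "i \<in> F" "v i \<noteq> 0" for i
    using shifted that by (metis eq_iff_diff_eq_0 scale_eq_0_iff)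
  obtain i where i: "i \<in> F" "v i \<noteq> 0"
    using x F by (metis sum.neutral)
  have "v j = 0" if "j \<in> F" "j \<noteq> i" for j
    using weight[OF i] weight[of j] distinct i that by metis
  then have "x = v i"
    using x(1) F i by (simp add: sum.remove sum.neutral)
  then show ?thesis using i weight by blast
qed

lemma br_rootsp:
  assumes K: "K \<subseteq> L" and x: "x \<in> rootsp sc L br K \<alpha>" and y: "y \<in> rootsp sc L br K \<beta>"
  shows "br x y \<in> rootsp sc L br K (\<lambda>h. \<alpha> h + \<beta> h)"
proof -
  have xL: "x \<in> L" and yL: "y \<in> L" using x y by (auto simp: rootsp_def)
  have "br h (br x y) = sc (\<alpha> h + \<beta> h) (br x y)" if h: "h \<in> K" for h
  proof -
    have hL: "h \<in> L" using h K by auto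
    have "br y h = sc (- \<beta> h) y" using br_antisym[OF yL hL] y h by (simp add: rootsp_def)
    then have \<beta>: "br x (br y h) = sc (- \<beta> h) (br x y)" using br_scale_right[OF xL yL] by (simp only:)
    have "br h x = sc (\<alpha> h) x" using x h by (simp add: rootsp_def)
    then have \<alpha>: "br y (br h x) = sc (- \<alpha> h) (br x y)"
      using br_scale_right[OF yL xL] br_antisym[OF yL xL] by simp
    have "br h (br x y) = - (br x (br y h) + br y (br h x))"
      using jacobi[OF hL xL yL] by (simp only: add.assoc eq_neg_iff_add_eq_0)
    also have "\<dots> = sc (\<alpha> h + \<beta> h) (br x y)"
      unfolding \<alpha> \<beta> by (simp add: scale_left_distrib add.commute)
    finally show ?thesis .
  qed
  then show ?thesis using br_closed[OF xL yL] by (simp add: rootsp_def)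
qed

lemma B_rootsp_orthogonal:
  assumes K: "K \<subseteq> L" and x: "x \<in> rootsp sc L br K \<alpha>" and y: "y \<in> rootsp sc L br K \<beta>"
    and h: "h \<in> K"
  shows "(\<alpha> h + \<beta> h) * B x y = 0"
proof -
  have xL: "x \<in> L" and yL: "y \<in> L" and hL: "h \<in> L" using x y h K by (auto simp: rootsp_def)
  have "br x h = sc (- \<alpha> h) x" using br_antisym[OF xL hL] x h by (simp add: rootsp_def)
  then have "B (br x h) y = - \<alpha> h * B x y" using B_scale_left[OF xL yL] by (simp only:)
  moreover have "B (br x h) y = \<beta> h * B x y"
    using B_invariant[OF xL hL yL] y h xL yL by (simp add: rootsp_def B_scale_right)
  ultimately have "\<beta> h * B x y = - (\<alpha> h * B x y)" by simp
  then show ?thesis by (simp add: distrib_right)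
qed

end

section \<open>Extended affine Lie algebras\<close>

locale eala_setting = complex_vector_space sc
  for sc :: "complex \<Rightarrow> 'v::ab_group_add \<Rightarrow> 'v" +
  fixes L :: "'v set" and br :: "'v \<Rightarrow> 'v \<Rightarrow> 'v" and B :: "'v \<Rightarrow> 'v \<Rightarrow> complex"
    and H :: "'v set"
  assumes eala: "eala sc L br B H"

sublocale eala_setting \<subseteq> lie_algebra_with_form sc L br B
  using eala by unfold_locales (simp_all add: eala_def)

context eala_setting
begin

abbreviation E where "E \<equiv> rootsp sc L br H"
abbreviation R where "R \<equiv> roots sc L br H"
abbreviation ip where "ip \<equiv> ipf B H"

lemma H_subset: "H \<subseteq> L"
  using eala by (simp add: eala_def)

lemma subspace_H: "subspace H"
  using eala by (simp add: eala_def)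

lemma H_finite_dim: "\<exists>F. finite F \<and> H \<subseteq> span F"
  using eala by (auto simp: eala_def)

lemma L_eq_span_rootsp: "L = span (\<Union>\<alpha>\<in>hdual sc H. E \<alpha>)"
  using eala by (simp add: eala_def)

lemma rootsp_zero: "E (\<lambda>_. 0) = H"
  using eala by (simp add: eala_def)

lemma ad_root_vector_locally_nilpotent:
  "\<alpha> \<in> nonisot ip R \<Longrightarrow> x \<in> E \<alpha> \<Longrightarrow> y \<in> L \<Longrightarrow> \<exists>n. (br x ^^ n) y = 0"
  using eala by (simp add: eala_def)

lemma reduced_roots: "reduced_quot ip R"
  using eala by (simp add: eala_def)

lemma roots_subset_hdual: "R \<subseteq> hdual sc H"
  by (auto simp: roots_def)

lemma rootsp_not_root: "\<beta> \<in> hdual sc H \<Longrightarrow> \<beta> \<notin> R \<Longrightarrow> x \<in> E \<beta> \<Longrightarrow> x = 0"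
  by (auto simp: roots_def)

lemma H_abelian: "h \<in> H \<Longrightarrow> h' \<in> H \<Longrightarrow> br h h' = 0"
  using rootsp_zero by (auto simp: rootsp_def)

lemma L_sum_root_vectors:
  "x \<in> L \<Longrightarrow> \<exists>F v. finite F \<and> F \<subseteq> hdual sc H \<and> (\<forall>\<alpha>\<in>F. v \<alpha> \<in> E \<alpha>) \<and> x = sum v F"
  using span_Union_subspaces_sum[of "hdual sc H" E x] rootsp_subspace[OF H_subset] L_eq_span_rootsp
  by blast

lemma B_root_vectors_orthogonal:
  assumes "\<alpha> \<in> hdual sc H" "\<beta> \<in> hdual sc H" "(\<lambda>h. \<alpha> h + \<beta> h) \<noteq> (\<lambda>_. 0)"
    and "x \<in> E \<alpha>" "y \<in> E \<beta>"
  shows "B x y = 0"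
proof -
  have "(\<lambda>h. \<alpha> h + \<beta> h) \<in> hdual sc H"
    using hdual_linear_combination[OF assms(1,2), of 1 1] by simp
  then obtain h where h: "h \<in> H" "\<alpha> h + \<beta> h \<noteq> 0"
    using assms(3) hdual_eqI[OF _ hdual_zero] by blast
  have "(\<alpha> h + \<beta> h) * B x y = 0" by (rule B_rootsp_orthogonal[OF H_subset assms(4,5) h(1)])
  with h(2) show ?thesis by simp
qed

lemma root_vector_eq_0_if_orthogonal:
  assumes \<alpha>: "\<alpha> \<in> hdual sc H" and x: "x \<in> E \<alpha>"
    and orth: "\<And>y. y \<in> E (\<lambda>h. - \<alpha> h) \<Longrightarrow> B x y = 0"
  shows "x = 0"
proof -
  have xL: "x \<in> L" using x rootsp_subset by blast
  have "B x z = 0" if z: "z \<in> L" for z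
  proof -
    obtain F w where F: "finite F" "F \<subseteq> hdual sc H" "\<forall>\<beta>\<in>F. w \<beta> \<in> E \<beta>" "z = sum w F"
      using L_sum_root_vectors[OF z] by blast
    have wL: "w \<beta> \<in> L" if "\<beta> \<in> F" for \<beta>
      using F(3) that rootsp_subset by blast
    have "B x (w \<beta>) = 0" if \<beta>: "\<beta> \<in> F" for \<beta>
    proof (cases "\<beta> = (\<lambda>h. - \<alpha> h)")
      case True
      then show ?thesis using orth F(3) \<beta> by simp
    next
      case False
      then have "(\<lambda>h. \<alpha> h + \<beta> h) \<noteq> (\<lambda>_. 0)" by (auto simp: fun_eq_iff add_eq_0_iff)
      then show ?thesis
        using B_root_vectors_orthogonal[OF \<alpha> _ _ x] F(2,3) \<beta> by blast
    qed
    then have "(\<Sum>\<beta>\<in>F. B x (w \<beta>)) = 0" by (rule sum.neutral[OF ballI])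
    then show ?thesis using F(4) B_sum_right[of x F w, OF xL wL] by simp
  qed
  then show ?thesis using B_nondegenerate xL by (simp add: nondegenerate_on_def)
qed

lemma nondegenerate_H: "nondegenerate_on B H"
  unfolding nondegenerate_on_def
proof (intro ballI impI)
  fix h assume "h \<in> H" "\<forall>y\<in>H. B h y = 0"
  then show "h = 0" using root_vector_eq_0_if_orthogonal[OF hdual_zero, of h] rootsp_zero by simp
qed

lemma tvec_H:
  assumes "\<alpha> \<in> hdual sc H"
  shows "tvec B H \<alpha> \<in> H" "\<forall>h\<in>H. \<alpha> h = B h (tvec B H \<alpha>)"
proof -
  obtain F where "finite F" "H \<subseteq> span F" using H_finite_dim by blast
  from tvec_represents[OF subspace_H H_subset this(2,1) nondegenerate_H assms]
  show "tvec B H \<alpha> \<in> H" "\<forall>h\<in>H. \<alpha> h = B h (tvec B H \<alpha>)" .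
qed

lemma tvec_H_unique:
  assumes "t \<in> H" "\<And>h. h \<in> H \<Longrightarrow> \<alpha> h = B h t"
  shows "tvec B H \<alpha> = t"
  by (rule tvec_unique[OF subspace_H H_subset nondegenerate_H assms(1)]) (use assms(2) in blast)

lemma tvec_zero: "tvec B H (\<lambda>_. 0) = 0"
  using B_zero_right H_subset by (intro tvec_H_unique subspace_0[OF subspace_H]) auto

lemma ip_zero: "ip (\<lambda>_. 0) (\<lambda>_. 0) = 0"
  using B_zero_right subspace_0[OF subspace_V] by (simp add: ipf_def tvec_zero)

lemma tvec_add_scale:
  assumes "\<alpha> \<in> hdual sc H" "\<beta> \<in> hdual sc H"
  shows "tvec B H (\<lambda>h. \<alpha> h + c * \<beta> h) = tvec B H \<alpha> + sc c (tvec B H \<beta>)"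
proof (rule tvec_H_unique)
  show "tvec B H \<alpha> + sc c (tvec B H \<beta>) \<in> H"
    using assms tvec_H subspace_H by (intro subspace_add subspace_scale) auto
  fix h assume "h \<in> H"
  then show "\<alpha> h + c * \<beta> h = B h (tvec B H \<alpha> + sc c (tvec B H \<beta>))"
    using assms tvec_H H_subset subspace_scale[OF subspace_V]
    by (simp add: B_add_right B_scale_right subset_iff)
qed

lemma tvec_sum:
  assumes "G \<subseteq> hdual sc H"
  shows "tvec B H (\<lambda>h. \<Sum>\<sigma>\<in>G. c \<sigma> * \<sigma> h) = (\<Sum>\<sigma>\<in>G. sc (c \<sigma>) (tvec B H \<sigma>))"
proof (rule tvec_H_unique)
  show "(\<Sum>\<sigma>\<in>G. sc (c \<sigma>) (tvec B H \<sigma>)) \<in> H"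
    using assms tvec_H subspace_H by (intro subspace_sum subspace_scale) auto
  fix h assume "h \<in> H"
  then show "(\<Sum>\<sigma>\<in>G. c \<sigma> * \<sigma> h) = B h (\<Sum>\<sigma>\<in>G. sc (c \<sigma>) (tvec B H \<sigma>))"
    using assms tvec_H H_subset subspace_scale[OF subspace_V]
    by (auto simp: B_sum_right B_scale_right subset_iff intro!: sum.cong)
qed

lemma is_cover_H:
  assumes "R' \<subseteq> R"
  shows "is_cover sc B H R' H"
  using assms subspace_H tvec_H roots_subset_hdual nondegenerate_H
  by (auto simp: is_cover_def nonisot_def nondegenerate_on_def)

lemma br_opposite_root_vectors:
  assumes \<alpha>: "\<alpha> \<in> hdual sc H" and x: "x \<in> E \<alpha>" and y: "y \<in> E (\<lambda>h. - \<alpha> h)"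
  shows "br x y = sc (B x y) (tvec B H \<alpha>)"
proof -
  have xL: "x \<in> L" and yL: "y \<in> L" using x y rootsp_subset by blast+
  have t: "tvec B H \<alpha> \<in> H" "\<forall>h\<in>H. \<alpha> h = B h (tvec B H \<alpha>)" using tvec_H[OF \<alpha>] by blast+
  have "br x y \<in> E (\<lambda>_. 0)" using br_rootsp[OF H_subset x y] by simp
  then have brH: "br x y \<in> H" using rootsp_zero by simp
  have "br x y - sc (B x y) (tvec B H \<alpha>) = 0"
  proof -
    have diffH: "br x y - sc (B x y) (tvec B H \<alpha>) \<in> H"
      using brH t(1) subspace_H by (intro subspace_diff subspace_scale) auto
    moreover have "B (br x y - sc (B x y) (tvec B H \<alpha>)) h = 0" if h: "h \<in> H" for h
    proof -
      have hL: "h \<in> L" and tL: "tvec B H \<alpha> \<in> L" using h t(1) H_subset by auto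
      have "B (br x y - sc (B x y) (tvec B H \<alpha>)) h = B h (br x y) - B x y * B h (tvec B H \<alpha>)"
        using B_sym diffH H_subset hL tL br_closed[OF xL yL] subspace_scale[OF subspace_V]
        by (simp add: B_diff_right B_scale_right subset_iff)
      also have "B h (br x y) = B (br h x) y" using B_invariant[OF hL xL yL] by simp
      also have "\<dots> = \<alpha> h * B x y" using x h xL yL by (simp add: rootsp_def B_scale_left)
      finally show ?thesis using t(2) h by simp
    qed
    ultimately show ?thesis using nondegenerate_H unfolding nondegenerate_on_def by blast
  qed
  then show ?thesis by simp
qed

end

section \<open>Lie covers\<close>

lemma nonneg_affine_imp_slope_eq_0:
  fixes a b :: real
  assumes "\<And>c. 0 \<le> a + c * b"
  shows "b = 0"
proof (rule ccontr)
  assume "b \<noteq> 0"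
  then have "a + (- (a + 1) / b) * b = -1" by (simp add: field_simps)
  with assms[of "- (a + 1) / b"] show False by simp
qed

locale lie_cover_setting = eala_setting sc L br B H
  for sc :: "complex \<Rightarrow> 'v::ab_group_add \<Rightarrow> 'v" and L br B H +
  fixes R' :: "('v \<Rightarrow> complex) set" and H' :: "'v set"
  assumes closed: "closed_subsystem sc L br B H R'" and cover: "is_cover sc B H R' H'"
begin

lemma R'_subset: "R' \<subseteq> R"
  using closed by (simp add: closed_subsystem_def)

lemma R'_ears: "is_ears H ip R'"
  using closed by (simp add: closed_subsystem_def)

lemma R'_add_closed: "\<alpha> \<in> R' \<Longrightarrow> \<beta> \<in> R' \<Longrightarrow> (\<lambda>h. \<alpha> h + \<beta> h) \<in> R \<Longrightarrow> (\<lambda>h. \<alpha> h + \<beta> h) \<in> R'"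
  using closed by (simp add: closed_subsystem_def)

lemma subspace_H': "subspace H'"
  using cover by (simp add: is_cover_def)

lemma H'_subset: "H' \<subseteq> H"
  using cover by (simp add: is_cover_def)

lemma nondegenerate_H': "nondegenerate_on B H'"
  using cover by (simp add: is_cover_def nondegenerate_on_def)

lemma tvec_nonisot_in_H': "\<alpha> \<in> nonisot ip R' \<Longrightarrow> tvec B H \<alpha> \<in> H'"
  using cover by (simp add: is_cover_def)

lemma R'_hdual: "R' \<subseteq> hdual sc H"
  using R'_subset roots_subset_hdual by blast

lemma zero_in_R': "(\<lambda>_. 0) \<in> R'"
  using R'_ears by (simp add: is_ears_def)

lemma uminus_in_R': "\<alpha> \<in> R' \<Longrightarrow> (\<lambda>h. - \<alpha> h) \<in> R'"
  using R'_ears by (simp add: is_ears_def)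

lemma R'_isot_nonisolated: "isot_nonisolated ip R'"
  using R'_ears by (simp add: is_ears_def)

lemma R'_connected: "connected_roots ip R'"
  using R'_ears by (simp add: is_ears_def)

lemma R'_discrete: "discrete_dual H R'"
  using R'_ears by (simp add: is_ears_def)

lemma ip_rspan_nonneg: "\<phi> \<in> rspan R' \<Longrightarrow> 0 \<le> Re (ip \<phi> \<phi>)"
  using R'_ears by (simp add: is_ears_def)

lemma ip_rspan_real: "\<phi> \<in> rspan R' \<Longrightarrow> \<psi> \<in> rspan R' \<Longrightarrow> Im (ip \<phi> \<psi>) = 0"
  using R'_ears by (simp add: is_ears_def)

lemma H'_subset_L: "H' \<subseteq> L"
  using H'_subset H_subset by blast

lemma rspan_R'_hdual:
  assumes "\<phi> \<in> rspan R'"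
  shows "\<phi> \<in> hdual sc H"
proof -
  obtain F c where F: "F \<subseteq> R'" and \<phi>: "\<phi> = (\<lambda>h. \<Sum>\<beta>\<in>F. complex_of_real (c \<beta>) * \<beta> h)"
    using assms unfolding rspan_def by blast
  have "F \<subseteq> hdual sc H" using F R'_hdual by blast
  from hdual_sum[OF this, of "\<lambda>\<beta>. complex_of_real (c \<beta>)"] show ?thesis by (simp add: \<phi>)
qed

lemma ip_isot_eq_0:
  assumes \<sigma>: "\<sigma> \<in> isot ip R'" and \<alpha>: "\<alpha> \<in> R'"
  shows "ip \<alpha> \<sigma> = 0"
proof -
  have \<sigma>R': "\<sigma> \<in> R'" and \<sigma>0: "B (tvec B H \<sigma>) (tvec B H \<sigma>) = 0"
    using \<sigma> by (auto simp: isot_def ipf_def)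
  have hd: "\<alpha> \<in> hdual sc H" "\<sigma> \<in> hdual sc H" using \<alpha> \<sigma>R' R'_hdual by blast+
  define t1 t2 where "t1 = tvec B H \<alpha>" and "t2 = tvec B H \<sigma>"
  have tL: "t1 \<in> L" "t2 \<in> L" using tvec_H(1)[OF hd(1)] tvec_H(1)[OF hd(2)] H_subset by (auto simp: t1_def t2_def)
  have "0 \<le> Re (B t1 t1) + c * (2 * Re (B t1 t2))" for c :: real
  proof -
    let ?x = "\<lambda>h. \<alpha> h + complex_of_real c * \<sigma> h"
    have "?x \<in> rspan R'" using rspan_add_scale[OF rspan_base[OF \<alpha>] rspan_base[OF \<sigma>R']] .
    moreover have "tvec B H ?x = t1 + sc (complex_of_real c) t2"
      using tvec_add_scale[OF hd] by (simp add: t1_def t2_def)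
    ultimately have "0 \<le> Re (B (t1 + sc (complex_of_real c) t2) (t1 + sc (complex_of_real c) t2))"
      using ip_rspan_nonneg by (fastforce simp: ipf_def)
    then show ?thesis using B_square_add_scale[OF tL] \<sigma>0 by (simp add: t2_def)
  qed
  then have "Re (B t1 t2) = 0" using nonneg_affine_imp_slope_eq_0 by fastforce
  moreover have "Im (B t1 t2) = 0"
    using ip_rspan_real[OF rspan_base[OF \<alpha>] rspan_base[OF \<sigma>R']] by (simp add: ipf_def t1_def t2_def)
  ultimately show ?thesis by (simp add: ipf_def t1_def t2_def complex_eq_iff)
qed

lemma tvec_in_H':
  assumes \<sigma>: "\<sigma> \<in> R'"
  shows "tvec B H \<sigma> \<in> H'"
proof (cases "ip \<sigma> \<sigma> = 0")
  case False
  then show ?thesis using tvec_nonisot_in_H' \<sigma> by (simp add: nonisot_def)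
next
  case True
  then have \<sigma>_isot: "\<sigma> \<in> isot ip R'" using \<sigma> by (simp add: isot_def)
  then obtain \<alpha> where \<alpha>: "\<alpha> \<in> nonisot ip R'" and sum: "(\<lambda>h. \<alpha> h + \<sigma> h) \<in> R'"
    using R'_isot_nonisolated by (auto simp: isot_nonisolated_def)
  have \<alpha>R': "\<alpha> \<in> R'" and \<alpha>_nonisot: "ip \<alpha> \<alpha> \<noteq> 0" using \<alpha> by (auto simp: nonisot_def)
  have hd: "\<alpha> \<in> hdual sc H" "\<sigma> \<in> hdual sc H" using \<alpha>R' \<sigma> R'_hdual by blast+
  define t1 t2 where "t1 = tvec B H \<alpha>" and "t2 = tvec B H \<sigma>"
  have tL: "t1 \<in> L" "t2 \<in> L" using tvec_H(1)[OF hd(1)] tvec_H(1)[OF hd(2)] H_subset by (auto simp: t1_def t2_def)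
  have t_sum: "tvec B H (\<lambda>h. \<alpha> h + \<sigma> h) = t1 + t2"
    using tvec_add_scale[OF hd, of 1] by (simp add: t1_def t2_def)
  have "ip (\<lambda>h. \<alpha> h + \<sigma> h) (\<lambda>h. \<alpha> h + \<sigma> h) = ip \<alpha> \<alpha>"
    using B_square_add_scale[OF tL, of 1] t_sum True ip_isot_eq_0[OF \<sigma>_isot \<alpha>R']
    by (simp add: ipf_def t1_def t2_def)
  then have "(\<lambda>h. \<alpha> h + \<sigma> h) \<in> nonisot ip R'" using sum \<alpha>_nonisot by (simp add: nonisot_def)
  then have "t1 + t2 \<in> H'" using tvec_nonisot_in_H' t_sum by metis
  moreover have "t1 \<in> H'" using tvec_nonisot_in_H'[OF \<alpha>] by (simp add: t1_def)
  ultimately have "(t1 + t2) - t1 \<in> H'" using subspace_diff[OF subspace_H'] by blast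
  then show ?thesis by (simp add: t2_def)
qed

lemma rspan_R'_tvec_in_H':
  assumes "\<phi> \<in> rspan R'"
  shows "tvec B H \<phi> \<in> H'"
proof -
  obtain F c where F: "finite F" "F \<subseteq> R'" and \<phi>: "\<phi> = (\<lambda>h. \<Sum>\<beta>\<in>F. complex_of_real (c \<beta>) * \<beta> h)"
    using assms unfolding rspan_def by blast
  have "tvec B H \<phi> = (\<Sum>\<beta>\<in>F. sc (complex_of_real (c \<beta>)) (tvec B H \<beta>))"
    unfolding \<phi> using F(2) R'_hdual by (intro tvec_sum) blast
  also have "\<dots> \<in> H'"
    using F(2) tvec_in_H' by (intro subspace_sum[OF subspace_H'] subspace_scale[OF subspace_H']) blast
  finally show ?thesis .
qed

lemma rspan_R'_eqI:
  assumes \<phi>: "\<phi> \<in> rspan R'" and \<psi>: "\<psi> \<in> rspan R'" and eq: "\<And>h. h \<in> H' \<Longrightarrow> \<phi> h = \<psi> h"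
  shows "\<phi> = \<psi>"
proof -
  have hd: "\<phi> \<in> hdual sc H" "\<psi> \<in> hdual sc H" using \<phi> \<psi> rspan_R'_hdual by blast+
  define t1 t2 where "t1 = tvec B H \<phi>" and "t2 = tvec B H \<psi>"
  have t: "t1 \<in> H'" "t2 \<in> H'"
    using rspan_R'_tvec_in_H'[OF \<phi>] rspan_R'_tvec_in_H'[OF \<psi>] by (simp_all add: t1_def t2_def)
  have "B (t1 - t2) y = 0" if y: "y \<in> H'" for y
  proof -
    have L: "y \<in> L" "t1 \<in> L" "t2 \<in> L" "t1 - t2 \<in> L"
      using y t H'_subset_L subspace_diff[OF subspace_V] by auto
    have "B (t1 - t2) y = B y t1 - B y t2" using B_sym[OF L(4,1)] B_diff_right[OF L(2,3,1)] by simp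
    also have "\<dots> = \<phi> y - \<psi> y"
      using tvec_H(2)[OF hd(1)] tvec_H(2)[OF hd(2)] y H'_subset by (auto simp: t1_def t2_def)
    finally show ?thesis using eq y by simp
  qed
  then have "t1 - t2 = 0"
    using nondegenerate_H' subspace_diff[OF subspace_H' t] unfolding nondegenerate_on_def by blast
  then have "\<phi> h = \<psi> h" if "h \<in> H" for h
    using tvec_H(2)[OF hd(1)] tvec_H(2)[OF hd(2)] that by (simp add: t1_def t2_def)
  then show ?thesis by (rule hdual_eqI[OF hd])
qed

lemma R'_separated_by_H':
  assumes "\<alpha> \<in> R'" "\<beta> \<in> R'" "\<alpha> \<noteq> \<beta>"
  shows "\<exists>h\<in>H'. \<alpha> h \<noteq> \<beta> h"
  using rspan_R'_eqI[OF rspan_base[OF assms(1)] rspan_base[OF assms(2)]] assms(3) by blast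

lemma inj_on_restr: "inj_on (restr H') R'"
  using R'_separated_by_H' by (intro inj_onI) (metis restr_apply)

lemma tvec_restr:
  assumes "\<alpha> \<in> R'"
  shows "tvec B H' (restr H' \<alpha>) = tvec B H \<alpha>"
proof (rule tvec_unique[OF subspace_H' H'_subset_L nondegenerate_H' tvec_in_H'[OF assms]])
  have "\<forall>h\<in>H. \<alpha> h = B h (tvec B H \<alpha>)" using tvec_H(2) assms R'_hdual by blast
  then show "\<forall>h\<in>H'. restr H' \<alpha> h = B h (tvec B H \<alpha>)" using H'_subset by auto
qed

lemma ipf_restr: "\<alpha> \<in> R' \<Longrightarrow> \<beta> \<in> R' \<Longrightarrow> ipf B H' (restr H' \<alpha>) (restr H' \<beta>) = ip \<alpha> \<beta>"
  by (simp add: ipf_def tvec_restr)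

lemma restr_R'_hdual: "\<alpha> \<in> R' \<Longrightarrow> restr H' \<alpha> \<in> hdual sc H'"
  using restr_hdual subspace_H' H'_subset R'_hdual by blast

definition cover_summand :: "('v \<Rightarrow> complex) \<Rightarrow> 'v set" where
  "cover_summand \<gamma> = (if \<gamma> = (\<lambda>_. 0) then H' else E \<gamma>)"

abbreviation Lc where "Lc \<equiv> lie_cover sc L br H R' H'"

lemma lie_cover_eq_span: "Lc = span (\<Union>\<gamma>\<in>R'. cover_summand \<gamma>)"
proof -
  have "H' \<union> (\<Union>\<alpha>\<in>R' - {\<lambda>_. 0}. E \<alpha>) = (\<Union>\<gamma>\<in>R'. cover_summand \<gamma>)"
    using zero_in_R' by (auto simp: cover_summand_def split: if_splits)
  then show ?thesis by (simp add: lie_cover_def)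
qed

lemma subspace_cover_summand: "subspace (cover_summand \<gamma>)"
  using subspace_H' rootsp_subspace[OF H_subset] by (simp add: cover_summand_def)

lemma cover_summand_subset_rootsp: "cover_summand \<gamma> \<subseteq> E \<gamma>"
  using H'_subset rootsp_zero by (auto simp: cover_summand_def)

lemma cover_summand_subset_L: "cover_summand \<gamma> \<subseteq> L"
  using cover_summand_subset_rootsp rootsp_subset by blast

lemma cover_summand_subset_lie_cover: "\<gamma> \<in> R' \<Longrightarrow> cover_summand \<gamma> \<subseteq> Lc"
  unfolding lie_cover_eq_span using span_superset by blast

lemma H'_subset_lie_cover: "H' \<subseteq> Lc"
  using cover_summand_subset_lie_cover[OF zero_in_R'] by (simp add: cover_summand_def)

lemma lie_cover_subset: "Lc \<subseteq> L"
  unfolding lie_cover_eq_span using cover_summand_subset_L by (intro span_minimal subspace_V) blast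

lemma subspace_lie_cover: "subspace Lc"
  unfolding lie_cover_eq_span by simp

lemma lie_cover_sum_summands:
  "x \<in> Lc \<Longrightarrow> \<exists>F v. finite F \<and> F \<subseteq> R' \<and> (\<forall>\<gamma>\<in>F. v \<gamma> \<in> cover_summand \<gamma>) \<and> x = sum v F"
  unfolding lie_cover_eq_span
  using span_Union_subspaces_sum[of R' cover_summand x] subspace_cover_summand by blast

lemma rootsp_lie_cover: "rootsp sc Lc br K f = Lc \<inter> rootsp sc L br K f"
  by (rule rootsp_subalgebra[OF lie_cover_subset])

lemma lie_cover_weight_vector:
  assumes x: "x \<in> rootsp sc Lc br H' \<beta>" "x \<noteq> 0"
  shows "\<exists>\<gamma>\<in>R'. (\<forall>h\<in>H'. \<beta> h = \<gamma> h) \<and> x \<in> cover_summand \<gamma>"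
proof -
  have "x \<in> Lc" using x(1) by (simp add: rootsp_def)
  then obtain F v where F: "finite F" "F \<subseteq> R'" "\<forall>\<gamma>\<in>F. v \<gamma> \<in> cover_summand \<gamma>" "x = sum v F"
    using lie_cover_sum_summands by blast
  have "\<forall>\<gamma>\<in>F. v \<gamma> \<in> rootsp sc L br H' \<gamma>"
    using F(3) cover_summand_subset_rootsp rootsp_antimono[OF H'_subset] by blast
  moreover have "\<forall>\<gamma>\<in>F. \<forall>\<delta>\<in>F. \<gamma> \<noteq> \<delta> \<longrightarrow> (\<exists>h\<in>H'. \<gamma> h \<noteq> \<delta> h)"
    using F(2) R'_separated_by_H' by blast
  moreover have "x \<in> rootsp sc L br H' \<beta>" using x(1) rootsp_lie_cover by blast
  ultimately obtain \<gamma> where "\<gamma> \<in> F" "\<forall>h\<in>H'. \<beta> h = \<gamma> h" "x = v \<gamma>"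
    using weight_vector_eq_component[OF H'_subset_L F(1) _ _ F(4) _ x(2), of "\<lambda>\<gamma>. \<gamma>"] by blast
  then show ?thesis using F(2,3) by blast
qed

lemma rootsp_lie_cover_restr:
  assumes \<gamma>: "\<gamma> \<in> R'"
  shows "rootsp sc Lc br H' (restr H' \<gamma>) = cover_summand \<gamma>"
proof
  show "cover_summand \<gamma> \<subseteq> rootsp sc Lc br H' (restr H' \<gamma>)"
  proof
    fix x assume x: "x \<in> cover_summand \<gamma>"
    then have "x \<in> rootsp sc L br H' \<gamma>"
      using cover_summand_subset_rootsp rootsp_antimono[OF H'_subset] by blast
    then show "x \<in> rootsp sc Lc br H' (restr H' \<gamma>)"
      using x cover_summand_subset_lie_cover[OF \<gamma>] by (auto simp: rootsp_def)
  qed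
  show "rootsp sc Lc br H' (restr H' \<gamma>) \<subseteq> cover_summand \<gamma>"
  proof
    fix x assume x: "x \<in> rootsp sc Lc br H' (restr H' \<gamma>)"
    show "x \<in> cover_summand \<gamma>"
    proof (cases "x = 0")
      case True
      then show ?thesis using subspace_0[OF subspace_cover_summand] by simp
    next
      case False
      then obtain \<delta> where \<delta>: "\<delta> \<in> R'" "\<forall>h\<in>H'. restr H' \<gamma> h = \<delta> h" "x \<in> cover_summand \<delta>"
        using lie_cover_weight_vector[OF x] by blast
      have "restr H' \<gamma> = restr H' \<delta>" using \<delta>(2) by (auto simp: restr_def fun_eq_iff)
      then have "\<gamma> = \<delta>" using inj_on_restr \<gamma> \<delta>(1) by (simp add: inj_on_def)
      then show ?thesis using \<delta>(3) by simp
    qed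
  qed
qed

lemma H'_nonzero: "\<exists>t\<in>H'. t \<noteq> 0"
proof -
  have "(\<lambda>_. 0) \<in> isot ip R'" using zero_in_R' ip_zero by (simp add: isot_def)
  then obtain \<alpha> where \<alpha>: "\<alpha> \<in> nonisot ip R'" using R'_isot_nonisolated by (auto simp: isot_nonisolated_def)
  then have "tvec B H \<alpha> \<noteq> 0"
    using B_zero_right subspace_0[OF subspace_V] by (auto simp: nonisot_def ipf_def)
  then show ?thesis using tvec_nonisot_in_H'[OF \<alpha>] by blast
qed

lemma cover_summand_nonzero: "\<gamma> \<in> R' \<Longrightarrow> cover_summand \<gamma> \<noteq> {0}"
  using H'_nonzero R'_subset by (auto simp: cover_summand_def roots_def)

lemma roots_lie_cover: "roots sc Lc br H' = restr H' ` R'"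
proof
  show "roots sc Lc br H' \<subseteq> restr H' ` R'"
  proof
    fix \<beta> assume "\<beta> \<in> roots sc Lc br H'"
    then have \<beta>: "\<beta> \<in> hdual sc H'" and nonzero: "rootsp sc Lc br H' \<beta> \<noteq> {0}"
      by (auto simp: roots_def)
    have "0 \<in> rootsp sc Lc br H' \<beta>"
      using subspace_0[OF subspace_lie_cover] br_zero_right H'_subset_L by (auto simp: rootsp_def)
    then obtain x where "x \<in> rootsp sc Lc br H' \<beta>" "x \<noteq> 0" using nonzero by blast
    then obtain \<gamma> where \<gamma>: "\<gamma> \<in> R'" "\<forall>h\<in>H'. \<beta> h = \<gamma> h"
      using lie_cover_weight_vector by blast
    have "\<beta> = restr H' \<gamma>" using \<gamma> by (intro hdual_eqI[OF \<beta> restr_R'_hdual]) auto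
    then show "\<beta> \<in> restr H' ` R'" using \<gamma>(1) by blast
  qed
  show "restr H' ` R' \<subseteq> roots sc Lc br H'"
    using rootsp_lie_cover_restr cover_summand_nonzero restr_R'_hdual by (auto simp: roots_def)
qed

lemma br_cover_summands:
  assumes \<alpha>: "\<alpha> \<in> R'" and \<beta>: "\<beta> \<in> R'" and x: "x \<in> cover_summand \<alpha>" and y: "y \<in> cover_summand \<beta>"
  shows "br x y \<in> Lc"
proof -
  have xE: "x \<in> E \<alpha>" and yE: "y \<in> E \<beta>" using x y cover_summand_subset_rootsp by blast+
  have hd: "\<alpha> \<in> hdual sc H" "\<beta> \<in> hdual sc H" using \<alpha> \<beta> R'_hdual by blast+
  have sum_hdual: "(\<lambda>h. \<alpha> h + \<beta> h) \<in> hdual sc H"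
    using hdual_linear_combination[OF hd, of 1 1] by simp
  have brE: "br x y \<in> E (\<lambda>h. \<alpha> h + \<beta> h)" by (rule br_rootsp[OF H_subset xE yE])
  consider "(\<lambda>h. \<alpha> h + \<beta> h) = (\<lambda>_. 0)"
    | "(\<lambda>h. \<alpha> h + \<beta> h) \<noteq> (\<lambda>_. 0)" "(\<lambda>h. \<alpha> h + \<beta> h) \<in> R"
    | "(\<lambda>h. \<alpha> h + \<beta> h) \<notin> R"
    by blast
  then show ?thesis
  proof cases
    case 1
    then have "\<beta> = (\<lambda>h. - \<alpha> h)" by (auto simp: fun_eq_iff add_eq_0_iff2)
    then have "br x y = sc (B x y) (tvec B H \<alpha>)" using br_opposite_root_vectors[OF hd(1) xE] yE by simp
    moreover have "tvec B H \<alpha> \<in> Lc" using tvec_in_H'[OF \<alpha>] H'_subset_lie_cover by blast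
    ultimately show ?thesis using subspace_scale[OF subspace_lie_cover] by simp
  next
    case 2
    then have "cover_summand (\<lambda>h. \<alpha> h + \<beta> h) = E (\<lambda>h. \<alpha> h + \<beta> h)"
      by (simp add: cover_summand_def)
    then show ?thesis
      using brE cover_summand_subset_lie_cover R'_add_closed[OF \<alpha> \<beta> 2(2)] by blast
  next
    case 3
    then have "br x y = 0" using rootsp_not_root[OF sum_hdual] brE by blast
    then show ?thesis using subspace_0[OF subspace_lie_cover] by simp
  qed
qed

lemma lie_cover_br_closed:
  assumes "x \<in> Lc" "y \<in> Lc"
  shows "br x y \<in> Lc"
proof (rule br_span_closed[of "\<Union>\<gamma>\<in>R'. cover_summand \<gamma>"])
  show "(\<Union>\<gamma>\<in>R'. cover_summand \<gamma>) \<subseteq> L" using cover_summand_subset_L by blast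
  show "subspace Lc" by (rule subspace_lie_cover)
  show "x \<in> span (\<Union>\<gamma>\<in>R'. cover_summand \<gamma>)" "y \<in> span (\<Union>\<gamma>\<in>R'. cover_summand \<gamma>)"
    using assms lie_cover_eq_span by simp_all
  fix a b assume "a \<in> (\<Union>\<gamma>\<in>R'. cover_summand \<gamma>)" "b \<in> (\<Union>\<gamma>\<in>R'. cover_summand \<gamma>)"
  then show "br a b \<in> Lc" using br_cover_summands by blast
qed

lemma lie_algebra_lie_cover: "lie_algebra sc Lc br"
  using lie subspace_lie_cover lie_cover_subset lie_cover_br_closed
  unfolding lie_algebra_def by (auto simp: subset_iff)

lemma B_lie_cover_component:
  assumes F: "finite F" "F \<subseteq> R'" "\<forall>\<delta>\<in>F. v \<delta> \<in> cover_summand \<delta>"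
    and \<gamma>: "\<gamma> \<in> F" and y: "y \<in> E (\<lambda>h. - \<gamma> h)"
  shows "B (sum v F) y = B (v \<gamma>) y"
proof -
  have vL: "v \<delta> \<in> L" if "\<delta> \<in> F" for \<delta> using F(3) that cover_summand_subset_L by blast
  have yL: "y \<in> L" using y rootsp_subset by blast
  have "B (v \<delta>) y = 0" if \<delta>: "\<delta> \<in> F - {\<gamma>}" for \<delta>
  proof (rule B_root_vectors_orthogonal)
    show "\<delta> \<in> hdual sc H" "(\<lambda>h. - \<gamma> h) \<in> hdual sc H"
      using \<delta> \<gamma> F(2) uminus_in_R' R'_hdual by blast+
    show "(\<lambda>h. \<delta> h + - \<gamma> h) \<noteq> (\<lambda>_. 0)" using \<delta> by (auto simp: fun_eq_iff)
    show "v \<delta> \<in> E \<delta>" using \<delta> F(3) cover_summand_subset_rootsp by blast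
  qed (rule y)
  then have "(\<Sum>\<delta>\<in>F - {\<gamma>}. B (v \<delta>) y) = 0" by (rule sum.neutral[OF ballI])
  moreover have "B (sum v F) y = (\<Sum>\<delta>\<in>F. B (v \<delta>) y)" by (rule B_sum_left[OF yL vL])
  ultimately show ?thesis using F(1) \<gamma> by (simp add: sum.remove)
qed

lemma nondegenerate_lie_cover: "nondegenerate_on B Lc"
  unfolding nondegenerate_on_def
proof (intro ballI impI)
  fix x assume x: "x \<in> Lc" and orth: "\<forall>y\<in>Lc. B x y = 0"
  obtain F v where F: "finite F" "F \<subseteq> R'" "\<forall>\<gamma>\<in>F. v \<gamma> \<in> cover_summand \<gamma>" "x = sum v F"
    using lie_cover_sum_summands[OF x] by blast
  have "v \<gamma> = 0" if \<gamma>: "\<gamma> \<in> F" for \<gamma>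
  proof -
    have \<gamma>R': "\<gamma> \<in> R'" using \<gamma> F(2) by blast
    have orth_opposite: "B (v \<gamma>) y = 0" if y: "y \<in> cover_summand (\<lambda>h. - \<gamma> h)" for y
    proof -
      have "y \<in> E (\<lambda>h. - \<gamma> h)" using y cover_summand_subset_rootsp by blast
      then have "B (v \<gamma>) y = B x y" using B_lie_cover_component[OF F(1-3) \<gamma>] F(4) by simp
      also have "\<dots> = 0"
        using orth y cover_summand_subset_lie_cover[OF uminus_in_R'[OF \<gamma>R']] by blast
      finally show ?thesis .
    qed
    show ?thesis
    proof (cases "\<gamma> = (\<lambda>_. 0)")
      case True
      have "v \<gamma> \<in> cover_summand \<gamma>" using F(3) \<gamma> by blast
      then have "v \<gamma> \<in> H'" using True by (simp add: cover_summand_def)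
      moreover have "cover_summand (\<lambda>h. - \<gamma> h) = H'" using True by (simp add: cover_summand_def)
      ultimately show ?thesis
        using orth_opposite nondegenerate_H' unfolding nondegenerate_on_def by blast
    next
      case False
      then have "cover_summand (\<lambda>h. - \<gamma> h) = E (\<lambda>h. - \<gamma> h)"
        by (auto simp: cover_summand_def fun_eq_iff)
      moreover have "v \<gamma> \<in> E \<gamma>" using F(3) \<gamma> cover_summand_subset_rootsp by blast
      ultimately show ?thesis
        using root_vector_eq_0_if_orthogonal[of \<gamma> "v \<gamma>"] orth_opposite \<gamma>R' R'_hdual by blast
    qed
  qed
  then show "x = 0" using F(4) by simp
qed

lemma ea1_form_lie_cover: "ea1_form sc Lc br B"
  using form lie_cover_subset nondegenerate_lie_cover
  unfolding ea1_form_def nondegenerate_on_def by (auto simp: subset_iff)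

lemma H'_finite_basis: "\<exists>F. finite F \<and> F \<subseteq> H' \<and> span F = H'"
proof -
  obtain F where "finite F" "H \<subseteq> span F" using H_finite_dim by blast
  then obtain Bs where "finite Bs" "span Bs = H'"
    using subspace_finite_basis[OF subspace_H'] H'_subset by blast
  then show ?thesis using span_superset by blast
qed

lemma lie_cover_eq_span_rootsp: "Lc = span (\<Union>\<beta>\<in>hdual sc H'. rootsp sc Lc br H' \<beta>)"
proof
  have "(\<Union>\<gamma>\<in>R'. cover_summand \<gamma>) \<subseteq> (\<Union>\<beta>\<in>hdual sc H'. rootsp sc Lc br H' \<beta>)"
    using rootsp_lie_cover_restr restr_R'_hdual by blast
  then show "Lc \<subseteq> span (\<Union>\<beta>\<in>hdual sc H'. rootsp sc Lc br H' \<beta>)"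
    unfolding lie_cover_eq_span by (rule span_mono)
  show "span (\<Union>\<beta>\<in>hdual sc H'. rootsp sc Lc br H' \<beta>) \<subseteq> Lc"
    by (rule span_minimal[OF _ subspace_lie_cover]) (auto simp: rootsp_def)
qed

lemma lie_cover_root_vectors_sum_eq_0:
  assumes "finite F" "F \<subseteq> hdual sc H'" "\<forall>\<alpha>\<in>F. x \<alpha> \<in> rootsp sc Lc br H' \<alpha>" "sum x F = 0"
  shows "\<forall>\<alpha>\<in>F. x \<alpha> = 0"
proof (rule weight_vectors_sum_eq_0[OF H'_subset_L assms(1) _ _ assms(4)])
  show "\<forall>\<alpha>\<in>F. x \<alpha> \<in> rootsp sc L br H' \<alpha>" using assms(3) rootsp_lie_cover by blast
  show "\<forall>\<alpha>\<in>F. \<forall>\<beta>\<in>F. \<alpha> \<noteq> \<beta> \<longrightarrow> (\<exists>h\<in>H'. \<alpha> h \<noteq> \<beta> h)"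
    using assms(2) hdual_eqI by blast
qed

lemma rootsp_lie_cover_zero: "rootsp sc Lc br H' (\<lambda>_. 0) = H'"
  using rootsp_lie_cover_restr[OF zero_in_R'] by (simp add: restr_def cover_summand_def)

lemma lie_cover_locally_nilpotent:
  assumes \<alpha>': "\<alpha>' \<in> nonisot (ipf B H') (restr H' ` R')" and x: "x \<in> rootsp sc Lc br H' \<alpha>'"
    and y: "y \<in> Lc"
  shows "\<exists>n. (br x ^^ n) y = 0"
proof -
  obtain \<alpha> where \<alpha>: "\<alpha> \<in> R'" "\<alpha>' = restr H' \<alpha>" using \<alpha>' by (auto simp: nonisot_def)
  have "ip \<alpha> \<alpha> \<noteq> 0" using \<alpha>' \<alpha> ipf_restr by (auto simp: nonisot_def)
  then have \<alpha>_nonisot: "\<alpha> \<in> nonisot ip R" and "\<alpha> \<noteq> (\<lambda>_. 0)"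
    using \<alpha>(1) R'_subset ip_zero by (auto simp: nonisot_def)
  then have "x \<in> E \<alpha>" using x rootsp_lie_cover_restr[OF \<alpha>(1)] \<alpha>(2) by (simp add: cover_summand_def)
  then show ?thesis using ad_root_vector_locally_nilpotent[OF \<alpha>_nonisot] y lie_cover_subset by blast
qed

text \<open>The point \<open>p\<close> is the orthogonal projection of \<open>f\<close> to \<open>H'\<close>; roots of \<open>R'\<close> cannot tell
  the two apart because their vectors \<open>t\<^sub>\<alpha>\<close> lie in \<open>H'\<close>.\<close>

lemma cover_projection:
  assumes f: "f \<in> H"
  shows "\<exists>p\<in>H'. \<forall>\<alpha>\<in>R'. \<alpha> p = \<alpha> f"
proof -
  obtain F where F: "finite F" "H' \<subseteq> span F" using H'_finite_basis by blast
  have \<phi>: "restr H' (\<lambda>h. B h f) \<in> hdual sc H'"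
    using f H_subset H'_subset_L subspace_add[OF subspace_H'] subspace_scale[OF subspace_H']
    by (auto simp: hdual_def restr_def B_add_left B_scale_left subset_iff)
  define p where "p = tvec B H' (restr H' (\<lambda>h. B h f))"
  note p_represents = tvec_represents[OF subspace_H' H'_subset_L F(2,1) nondegenerate_H' \<phi>]
  have p: "p \<in> H'" "\<forall>h\<in>H'. B h f = B h p"
    using p_represents unfolding p_def by auto
  have "\<alpha> p = \<alpha> f" if \<alpha>: "\<alpha> \<in> R'" for \<alpha>
  proof -
    have t: "tvec B H \<alpha> \<in> H'" "\<forall>h\<in>H. \<alpha> h = B h (tvec B H \<alpha>)"
      using tvec_in_H'[OF \<alpha>] tvec_H(2) \<alpha> R'_hdual by blast+
    have L: "f \<in> L" "p \<in> L" "tvec B H \<alpha> \<in> L" using f p(1) t(1) H_subset H'_subset_L by auto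
    have "\<alpha> f = B (tvec B H \<alpha>) f" using t(2) f B_sym[OF L(1,3)] by simp
    also have "\<dots> = B (tvec B H \<alpha>) p" using p t(1) by simp
    also have "\<dots> = \<alpha> p" using t(2) p(1) H'_subset B_sym[OF L(2,3)] by auto
    finally show ?thesis by simp
  qed
  then show ?thesis using p(1) by blast
qed

lemma nonisot_restr: "nonisot (ipf B H') (restr H' ` R') = restr H' ` nonisot ip R'"
  by (rule nonisot_image) (simp add: ipf_restr)

lemma isot_restr: "isot (ipf B H') (restr H' ` R') = restr H' ` isot ip R'"
  by (rule isot_image) (simp add: ipf_restr)

lemma discrete_restr: "discrete_dual H' (restr H' ` R')"
  unfolding discrete_dual_def
proof
  fix \<alpha>' assume "\<alpha>' \<in> restr H' ` R'"
  then obtain \<alpha> where \<alpha>: "\<alpha> \<in> R'" "\<alpha>' = restr H' \<alpha>" by blast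
  have "\<exists>F \<epsilon>. finite F \<and> F \<subseteq> H \<and> \<epsilon> > 0 \<and> (\<forall>\<beta>\<in>R'. (\<forall>h\<in>F. cmod (\<beta> h - \<alpha> h) < \<epsilon>) \<longrightarrow> \<beta> = \<alpha>)"
    using R'_discrete \<alpha>(1) unfolding discrete_dual_def by (rule bspec)
  then obtain F \<epsilon> where F: "finite F" "F \<subseteq> H" "\<epsilon> > 0"
    and near: "\<forall>\<beta>\<in>R'. (\<forall>h\<in>F. cmod (\<beta> h - \<alpha> h) < \<epsilon>) \<longrightarrow> \<beta> = \<alpha>"
    by (elim exE conjE) (rule that, assumption+)
  have "\<forall>f\<in>F. \<exists>p. p \<in> H' \<and> (\<forall>\<beta>\<in>R'. \<beta> p = \<beta> f)"
    using cover_projection F(2) by blast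
  then obtain p where p: "\<forall>f\<in>F. p f \<in> H' \<and> (\<forall>\<beta>\<in>R'. \<beta> (p f) = \<beta> f)"
    by (rule bchoice[elim_format]) blast
  show "\<exists>F \<epsilon>. finite F \<and> F \<subseteq> H' \<and> \<epsilon> > 0 \<and>
      (\<forall>\<beta>'\<in>restr H' ` R'. (\<forall>h\<in>F. cmod (\<beta>' h - \<alpha>' h) < \<epsilon>) \<longrightarrow> \<beta>' = \<alpha>')"
  proof (intro exI conjI ballI impI)
    show "finite (p ` F)" "p ` F \<subseteq> H'" "\<epsilon> > 0" using F p by auto
    fix \<beta>' assume "\<beta>' \<in> restr H' ` R'" and close: "\<forall>h\<in>p ` F. cmod (\<beta>' h - \<alpha>' h) < \<epsilon>"
    then obtain \<beta> where \<beta>: "\<beta> \<in> R'" "\<beta>' = restr H' \<beta>" by blast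
    have "cmod (\<beta> f - \<alpha> f) < \<epsilon>" if f: "f \<in> F" for f
    proof -
      have "\<beta>' (p f) = \<beta> f" "\<alpha>' (p f) = \<alpha> f" using p f \<alpha> \<beta> by auto
      moreover have "cmod (\<beta>' (p f) - \<alpha>' (p f)) < \<epsilon>" using close f by blast
      ultimately show ?thesis by simp
    qed
    then show "\<beta>' = \<alpha>'" using near \<alpha> \<beta> by blast
  qed
qed

lemma connected_restr: "connected_roots (ipf B H') (restr H' ` R')"
  by (rule connected_roots_image[OF _ R'_connected]) (simp add: ipf_restr)

lemma isot_nonisolated_restr: "isot_nonisolated (ipf B H') (restr H' ` R')"
  unfolding isot_nonisolated_def isot_restr nonisot_restr
proof
  fix \<sigma>' assume "\<sigma>' \<in> restr H' ` isot ip R'"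
  then obtain \<sigma> where \<sigma>: "\<sigma> \<in> isot ip R'" "\<sigma>' = restr H' \<sigma>" by blast
  then obtain \<alpha> where \<alpha>: "\<alpha> \<in> nonisot ip R'" "(\<lambda>h. \<alpha> h + \<sigma> h) \<in> R'"
    using R'_isot_nonisolated by (auto simp: isot_nonisolated_def)
  have "(\<lambda>h. restr H' \<alpha> h + \<sigma>' h) = restr H' (\<lambda>h. \<alpha> h + \<sigma> h)" by (simp add: \<sigma>(2) restr_add)
  then show "\<exists>\<alpha>'\<in>restr H' ` nonisot ip R'. (\<lambda>h. \<alpha>' h + \<sigma>' h) \<in> restr H' ` R'"
    using \<alpha> by auto
qed

lemma reduced_restr: "reduced_quot (ipf B H') (restr H' ` R')"
  unfolding reduced_quot_def nonisot_restr isot_restr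
proof (intro ballI notI)
  fix \<alpha>' \<beta>' assume "\<alpha>' \<in> restr H' ` nonisot ip R'" "\<beta>' \<in> restr H' ` nonisot ip R'"
    and in_span: "(\<lambda>h. \<beta>' h - 2 * \<alpha>' h) \<in> rspan (restr H' ` isot ip R')"
  then obtain \<alpha> \<beta> where \<alpha>: "\<alpha> \<in> nonisot ip R'" "\<alpha>' = restr H' \<alpha>"
    and \<beta>: "\<beta> \<in> nonisot ip R'" "\<beta>' = restr H' \<beta>" by blast
  have \<alpha>R': "\<alpha> \<in> R'" and \<beta>R': "\<beta> \<in> R'" using \<alpha> \<beta> by (auto simp: nonisot_def)
  obtain \<psi> where \<psi>: "\<psi> \<in> rspan (isot ip R')" "(\<lambda>h. \<beta>' h - 2 * \<alpha>' h) = restr H' \<psi>"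
    using rspan_restr_image[OF in_span] by blast
  have "(\<lambda>h. \<beta> h - 2 * \<alpha> h) \<in> rspan R'"
    using rspan_add_scale[OF rspan_base[OF \<beta>R'] rspan_base[OF \<alpha>R'], of "-2"] by simp
  moreover have "\<psi> \<in> rspan R'" using \<psi>(1) rspan_mono[of "isot ip R'" R'] by (auto simp: isot_def)
  moreover have "\<beta> h - 2 * \<alpha> h = \<psi> h" if "h \<in> H'" for h
    using fun_cong[OF \<psi>(2), of h] \<alpha>(2) \<beta>(2) that by simp
  ultimately have "(\<lambda>h. \<beta> h - 2 * \<alpha> h) = \<psi>" by (rule rspan_R'_eqI)
  moreover have "\<psi> \<in> rspan (isot ip R)"
    using \<psi>(1) rspan_mono[of "isot ip R'" "isot ip R"] R'_subset by (auto simp: isot_def)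
  moreover have "\<alpha> \<in> nonisot ip R" "\<beta> \<in> nonisot ip R" using \<alpha> \<beta> R'_subset by (auto simp: nonisot_def)
  ultimately show False using reduced_roots unfolding reduced_quot_def by blast
qed

lemma eala_lie_cover: "eala sc Lc br B H'"
  unfolding eala_def roots_lie_cover
proof (intro conjI allI impI ballI)
  show "lie_algebra sc Lc br" by (rule lie_algebra_lie_cover)
  show "ea1_form sc Lc br B" by (rule ea1_form_lie_cover)
  show "H' \<subseteq> Lc" by (rule H'_subset_lie_cover)
  show "subspace H'" by (rule subspace_H')
  show "br x y \<in> H'" if "x \<in> H'" "y \<in> H'" for x y
    using H_abelian[of x y] H'_subset subspace_0[OF subspace_H'] that by (simp add: subset_iff)
  show "\<exists>F. finite F \<and> F \<subseteq> H' \<and> span F = H'" by (rule H'_finite_basis)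
  show "Lc = span (\<Union>\<beta>\<in>hdual sc H'. rootsp sc Lc br H' \<beta>)" by (rule lie_cover_eq_span_rootsp)
  show "x \<alpha> = 0"
    if "finite F \<and> F \<subseteq> hdual sc H' \<and> (\<forall>\<alpha>\<in>F. x \<alpha> \<in> rootsp sc Lc br H' \<alpha>) \<and> sum x F = 0" "\<alpha> \<in> F"
    for F x \<alpha>
    using lie_cover_root_vectors_sum_eq_0 that by blast
  show "rootsp sc Lc br H' (\<lambda>_. 0) = H'" by (rule rootsp_lie_cover_zero)
  show "\<exists>n. (br x ^^ n) y = 0"
    if "\<alpha>' \<in> nonisot (ipf B H') (restr H' ` R')" "x \<in> rootsp sc Lc br H' \<alpha>'" "y \<in> Lc" for \<alpha>' x y
    using lie_cover_locally_nilpotent that by blast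
  show "discrete_dual H' (restr H' ` R')" by (rule discrete_restr)
  show "connected_roots (ipf B H') (restr H' ` R')" by (rule connected_restr)
  show "isot_nonisolated (ipf B H') (restr H' ` R')" by (rule isot_nonisolated_restr)
  show "reduced_quot (ipf B H') (restr H' ` R')" by (rule reduced_restr)
qed

end

theorem proposition4p3:
  fixes sc :: "complex \<Rightarrow> 'v::ab_group_add \<Rightarrow> 'v"
    and L H H' :: "'v set"
    and br :: "'v \<Rightarrow> 'v \<Rightarrow> 'v"
    and B :: "'v \<Rightarrow> 'v \<Rightarrow> complex"
    and R' :: "('v \<Rightarrow> complex) set"
  assumes "vector_space sc"
    and "eala sc L br B H"
    and "closed_subsystem sc L br B H R'"
    and "is_cover sc B H R' H'"
  shows "eala sc (lie_cover sc L br H R' H') br B H' \<and>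
         roots sc (lie_cover sc L br H R' H') br H' = restr H' ` R' \<and>
         eala sc (lie_cover sc L br H R' H) br B H \<and>
         roots sc (lie_cover sc L br H R' H) br H = R'"
proof -
  have eala_setting: "eala_setting sc L br B H"
    using assms(1,2) by (simp add: eala_setting_def eala_setting_axioms_def complex_vector_space_def)
  interpret cover: lie_cover_setting sc L br B H R' H'
    using eala_setting assms(3,4) by (simp add: lie_cover_setting_def lie_cover_setting_axioms_def)
  interpret self_cover: lie_cover_setting sc L br B H R' H
    using eala_setting assms(3) eala_setting.is_cover_H[OF eala_setting cover.R'_subset]
    by (simp add: lie_cover_setting_def lie_cover_setting_axioms_def)
  have "restr H ` R' = R'"
    using restr_hdual_self cover.R'_hdual by (force simp: image_iff)
  then show ?thesis
    using cover.eala_lie_cover cover.roots_lie_cover self_cover.eala_lie_cover self_cover.roots_lie_cover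
    by simp
qed

end
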